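(* If a dual-convex $m\times n$ net in $I^3$ is flexible in $I^3$, then every dual-convex $m\times n$ net that is a Combescure transformation of it, and every dual-convex $m\times n$ net obtained from it by a dual-affine transformation, is flexible in $I^3$.
   Context: $I^3$ is $\mathbb{R}^3$ with coordinates $(x,y,z)$; isotropic = parallel to the $z$-axis; top view of $(x,y,z)$ is $(x,y)$. Isotropic congruences: maps $\mathbf{x}\mapsto A\mathbf{x}+\mathbf{b}$, $A=\begin{pmatrix}\cos\phi&-\sin\phi&0\\ \sin\phi&\cos\phi&0\\ c_1&c_2&1\end{pmatrix}$. Metric duality: point $P=(P^1,P^2,P^3)\leftrightarrow$ plane $P^*\colon z=P^1x+P^2y-P^3$. An $m\times n$ net: points $F_{ij}$, $0\le i\le m,0\le j\le n$, with $F_{ij},F_{i+1,j},F_{i+1,j+1},F_{i,j+1}$ consecutive vertices of a convex planar quadrilateral (face $p_{ij}$) for all $0\le i<m,0\le j<n$. Boundary vertices: $i\in\{0,m\}$ or $j\in\{0,n\}$; consecutive faces around non-boundary $F_{ij}$: $p_{i-1,j-1},p_{i,j-1},p_{ij},p_{i-1,j}$. Convex 4-hedral angle with vertex $O$, flat angles, admissible (isotropic line through $O$ meets interior) as usual; dual-convex: $m,n\ge2$ and at each non-boundary vertex the four consecutive face planes are the planes of four consecutive flat angles of an admissible convex 4-hedral angle. Curvature at non-boundary vertex with consecutive faces $p_1..p_4$: $\Omega=\frac12\sum_{k=1}^4\det(\overline{p_k^*},\overline{p_{k+1}^*})$, $p_5=p_1$. Flexible in $I^3$: there is a continuous family of $m\times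 n$ nets $F_{ij}(t)$, $t\in[0,1]$, $F_{ij}(0)=F_{ij}$, with corresponding faces isotropically congruent, corresponding non-boundary vertices of equal curvature, and not for every $t$ an isotropic congruence $C_t$ with $F_{ij}(t)=C_t(F_{ij})$ for all $i,j$. Combescure transformation: a net with the same index set whose corresponding edges are parallel. Dual-affine transformation: a projective transformation of the projective closure of $I^3$ that keeps the $z$-direction (fixes the point at infinity of the $z$-axis). *)

theory Defs
  imports "HOL-Analysis.Analysis"
begin

text \<open>Points of the isotropic space I^3 = R^3 with coordinates (x,y,z).\<close>
type_synonym pt = "real \<times> real \<times> real"

definition px :: "pt \<Rightarrow> real" where "px p = fst p"
definition py :: "pt \<Rightarrow> real" where "py p = fst (snd p)"
definition pz :: "pt \<Rightarrow> real" where "pz p = snd (snd p)"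

definition iso_cong :: "real \<Rightarrow> real \<Rightarrow> real \<Rightarrow> pt \<Rightarrow> pt \<Rightarrow> pt" where
  "iso_cong phi c1 c2 b p =
     (cos phi * px p - sin phi * py p + px b,
      sin phi * px p + cos phi * py p + py b,
      c1 * px p + c2 * py p + pz p + pz b)"

definition convex_quad :: "pt \<Rightarrow> pt \<Rightarrow> pt \<Rightarrow> pt \<Rightarrow> bool" where
  "convex_quad A B C D \<longleftrightarrow>
     \<not> collinear {A, B, C} \<and>
     (\<exists>s t. 0 < s \<and> s < 1 \<and> 0 < t \<and> t < 1 \<and>
            (1 - s) *\<^sub>R A + s *\<^sub>R C = (1 - t) *\<^sub>R B + t *\<^sub>R D)"

text \<open>Nets are functions nat => nat => pt; only indices 0..m, 0..n matter.\<close>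
definition is_net :: "nat \<Rightarrow> nat \<Rightarrow> (nat \<Rightarrow> nat \<Rightarrow> pt) \<Rightarrow> bool" where
  "is_net m n F \<longleftrightarrow>
     (\<forall>i<m. \<forall>j<n. convex_quad (F i j) (F (Suc i) j) (F (Suc i) (Suc j)) (F i (Suc j)))"

definition interior_vertex :: "nat \<Rightarrow> nat \<Rightarrow> nat \<Rightarrow> nat \<Rightarrow> bool" where
  "interior_vertex m n i j \<longleftrightarrow> 0 < i \<and> i < m \<and> 0 < j \<and> j < n"

definition face_plane :: "(nat \<Rightarrow> nat \<Rightarrow> pt) \<Rightarrow> nat \<Rightarrow> nat \<Rightarrow> pt set" where
  "face_plane F i j = affine hull {F i j, F (Suc i) j, F (Suc i) (Suc j), F i (Suc j)}"

text \<open>Metric dual of a non-isotropic plane z = a x + b y - c is the point (a,b,c).\<close>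
definition plane_dual :: "pt set \<Rightarrow> pt" where
  "plane_dual P = (THE d. P = {x. pz x = px d * px x + py d * py x - pz d})"

definition det2 :: "real \<times> real \<Rightarrow> real \<times> real \<Rightarrow> real" where
  "det2 u v = fst u * snd v - snd u * fst v"

definition top_dual :: "pt set \<Rightarrow> real \<times> real" where
  "top_dual P = (px (plane_dual P), py (plane_dual P))"

definition vertex_face :: "(nat \<Rightarrow> nat \<Rightarrow> pt) \<Rightarrow> nat \<Rightarrow> nat \<Rightarrow> nat \<Rightarrow> pt set" where
  "vertex_face F i j k =
     (if k = 0 then face_plane F (i - 1) (j - 1)
      else if k = 1 then face_plane F i (j - 1)
      else if k = 2 then face_plane F i j
      else face_plane F (i - 1) j)"

definition curvature :: "(nat \<Rightarrow> nat \<Rightarrow> pt) \<Rightarrow> nat \<Rightarrow> nat \<Rightarrow> real" where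
  "curvature F i j =
     (1/2) * (\<Sum>k<4. det2 (top_dual (vertex_face F i j k))
                          (top_dual (vertex_face F i j ((k + 1) mod 4))))"

definition det3 :: "pt \<Rightarrow> pt \<Rightarrow> pt \<Rightarrow> real" where
  "det3 a b c =
     px a * (py b * pz c - pz b * py c)
   - py a * (px b * pz c - pz b * px c)
   + pz a * (px b * py c - py b * px c)"

text \<open>Convex 4-hedral angle with edge directions e 0, .., e 3 (cyclic order):
  for each flat angle (e k, e (k+1)), the other two edges lie strictly on the same side
  of its plane.\<close>
definition convex_4hedral :: "(nat \<Rightarrow> pt) \<Rightarrow> bool" where
  "convex_4hedral e \<longleftrightarrow>
     (\<forall>k<4. det3 (e k) (e ((k+1) mod 4)) (e ((k+2) mod 4))
            * det3 (e k) (e ((k+1) mod 4)) (e ((k+3) mod 4)) > 0)"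

text \<open>v (relative to the vertex) points into the interior of the angle.\<close>
definition in_angle_interior :: "(nat \<Rightarrow> pt) \<Rightarrow> pt \<Rightarrow> bool" where
  "in_angle_interior e v \<longleftrightarrow>
     (\<forall>k<4. det3 (e k) (e ((k+1) mod 4)) v
            * det3 (e k) (e ((k+1) mod 4)) (e ((k+2) mod 4)) > 0)"

text \<open>Admissible: the isotropic line through the vertex meets the interior.\<close>
definition admissible_4hedral :: "(nat \<Rightarrow> pt) \<Rightarrow> bool" where
  "admissible_4hedral e \<longleftrightarrow> convex_4hedral e \<and> (\<exists>s. in_angle_interior e (0, 0, s))"

definition dual_convex_at :: "(nat \<Rightarrow> nat \<Rightarrow> pt) \<Rightarrow> nat \<Rightarrow> nat \<Rightarrow> bool" where
  "dual_convex_at F i j \<longleftrightarrow>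
     (\<exists>v0 e. admissible_4hedral e \<and>
        (\<forall>k<4. vertex_face F i j k =
                 {v0 + s *\<^sub>R e k + t *\<^sub>R e ((k+1) mod 4) | s t. True}))"

definition dual_convex :: "nat \<Rightarrow> nat \<Rightarrow> (nat \<Rightarrow> nat \<Rightarrow> pt) \<Rightarrow> bool" where
  "dual_convex m n F \<longleftrightarrow> 2 \<le> m \<and> 2 \<le> n \<and> is_net m n F \<and>
     (\<forall>i j. interior_vertex m n i j \<longrightarrow> dual_convex_at F i j)"

definition flexible :: "nat \<Rightarrow> nat \<Rightarrow> (nat \<Rightarrow> nat \<Rightarrow> pt) \<Rightarrow> bool" where
  "flexible m n F \<longleftrightarrow>
     (\<exists>Ft :: real \<Rightarrow> nat \<Rightarrow> nat \<Rightarrow> pt.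
        (\<forall>i\<le>m. \<forall>j\<le>n. continuous_on {0..1} (\<lambda>t. Ft t i j)) \<and>
        (\<forall>i\<le>m. \<forall>j\<le>n. Ft 0 i j = F i j) \<and>
        (\<forall>t\<in>{0..1}. is_net m n (Ft t)) \<and>
        (\<forall>t\<in>{0..1}. \<forall>i<m. \<forall>j<n. \<exists>phi c1 c2 b.
            \<forall>(k, l) \<in> {(i, j), (Suc i, j), (Suc i, Suc j), (i, Suc j)}.
               Ft t k l = iso_cong phi c1 c2 b (F k l)) \<and>
        (\<forall>t\<in>{0..1}. \<forall>i j. interior_vertex m n i j \<longrightarrow>
            curvature (Ft t) i j = curvature F i j) \<and>
        \<not> (\<forall>t\<in>{0..1}. \<exists>phi c1 c2 b. \<forall>i\<le>m. \<forall>j\<le>n.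
               Ft t i j = iso_cong phi c1 c2 b (F i j)))"

definition parallel_vec :: "pt \<Rightarrow> pt \<Rightarrow> bool" where
  "parallel_vec u v \<longleftrightarrow> (\<exists>c. v = c *\<^sub>R u) \<or> (\<exists>c. u = c *\<^sub>R v)"

definition combescure :: "nat \<Rightarrow> nat \<Rightarrow> (nat \<Rightarrow> nat \<Rightarrow> pt) \<Rightarrow> (nat \<Rightarrow> nat \<Rightarrow> pt) \<Rightarrow> bool" where
  "combescure m n F G \<longleftrightarrow>
     (\<forall>i<m. \<forall>j\<le>n. parallel_vec (F (Suc i) j - F i j) (G (Suc i) j - G i j)) \<and>
     (\<forall>i\<le>m. \<forall>j<n. parallel_vec (F i (Suc j) - F i j) (G i (Suc j) - G i j))"

text \<open>Projective transformations of the projective closure of R^3, via invertible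
  4x4 matrices on homogeneous coordinates (x,y,z,1).\<close>
definition hom :: "pt \<Rightarrow> real^4" where
  "hom p = (\<chi> k. if k = 1 then px p else if k = 2 then py p else if k = 3 then pz p else 1)"

definition dehom :: "real^4 \<Rightarrow> pt" where
  "dehom v = (v $ 1 / v $ 4, v $ 2 / v $ 4, v $ 3 / v $ 4)"

definition z_infinity :: "real^4" where
  "z_infinity = (\<chi> k. if k = 3 then 1 else 0)"

definition dual_affine :: "real^4^4 \<Rightarrow> bool" where
  "dual_affine M \<longleftrightarrow> invertible M \<and> (\<exists>c. M *v z_infinity = c *\<^sub>R z_infinity)"

definition dual_affine_image :: "nat \<Rightarrow> nat \<Rightarrow> (nat \<Rightarrow> nat \<Rightarrow> pt) \<Rightarrow> (nat \<Rightarrow> nat \<Rightarrow> pt) \<Rightarrow> bool" where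
  "dual_affine_image m n F G \<longleftrightarrow>
     (\<exists>M. dual_affine M \<and>
        (\<forall>i\<le>m. \<forall>j\<le>n. (M *v hom (F i j)) $ 4 \<noteq> 0 \<and> G i j = dehom (M *v hom (F i j))))"

end

(* An isotropic congruence rotates the top view and changes heights by an affine function of
   the top view.  A flexion F_t of F is therefore encoded by the height differences
   h_t = z(F_t) - z(F): they are affine on every face and, for some t, not globally affine;
   and since the curvature at a vertex is the signed area of the top view of the dual
   quadrilateral, which rotations do not change, the vertically displaced nets F + h_t e_3 have
   the curvature of F.  Conversely such a vertical flexion h_t makes F + h_t e_3 a flexion,
   every face moving by a shear.
   Both transformations carry vertical flexions over.  For a Combescure transform G, integrate
   the increments of h_t along the edges, scaled by the edge ratios: the face planes of G have
   the slopes of those of F, the new heights have the face slopes of h_t, so all the signed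
   areas agree.  A dual-affine map acts linearly on plane coefficients; it turns h_t into
   c h_t / w, with w the homogeneous weight, and multiplies the signed area at each vertex by a
   nonzero factor that depends only on the vertex. *)

theory Submission
  imports Defs
begin

lemma pt_eq_iff: "p = q \<longleftrightarrow> px p = px q \<and> py p = py q \<and> pz p = pz q"
  by (cases p; cases q) (auto simp: px_def py_def pz_def)

lemma coords_Pair [simp]: "px (a, b, c) = a" "py (a, b, c) = b" "pz (a, b, c) = c"
  by (simp_all add: px_def py_def pz_def)

lemma coords_vector_ops [simp]:
  "px (p + q) = px p + px q" "py (p + q) = py p + py q" "pz (p + q) = pz p + pz q"
  "px (p - q) = px p - px q" "py (p - q) = py p - py q" "pz (p - q) = pz p - pz q"
  "px (c *\<^sub>R p) = c * px p" "py (c *\<^sub>R p) = c * py p" "pz (c *\<^sub>R p) = c * pz p"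
  "px 0 = 0" "py 0 = 0" "pz 0 = 0"
  by (simp_all add: px_def py_def pz_def)

lemma coords_eta [simp]: "(px p, py p, pz p) = p"
  by (simp add: pt_eq_iff)

lemma det2_Pair [simp]: "det2 (a, b) (c, d) = a * d - b * c"
  by (simp add: det2_def)

lemma det2_scaleR: "det2 (c *\<^sub>R u) (c *\<^sub>R v) = c\<^sup>2 * det2 u v"
  by (cases u; cases v) (simp add: power2_eq_square algebra_simps)

lemma det2_orthogonal_eq_0:
  fixes a1 a2 b1 b2 g1 g2 :: real
  assumes "det2 (a1, a2) (b1, b2) \<noteq> 0" "g1 * a1 + g2 * a2 = 0" "g1 * b1 + g2 * b2 = 0"
  shows "g1 = 0 \<and> g2 = 0"
proof -
  have "g1 * (a1 * b2 - a2 * b1) = 0" "g2 * (a1 * b2 - a2 * b1) = 0"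
    using assms(2,3) by algebra+
  then show ?thesis using assms(1) by simp
qed

lemma det2_solvable:
  fixes a1 a2 b1 b2 x y :: real
  assumes "det2 (a1, a2) (b1, b2) \<noteq> 0"
  shows "\<exists>s t. s * a1 + t * b1 = x \<and> s * a2 + t * b2 = y"
proof -
  define d where "d = a1 * b2 - a2 * b1"
  have "d \<noteq> 0" using assms by (simp add: d_def)
  then have "(x * b2 - y * b1) / d * a1 + (a1 * y - a2 * x) / d * b1 = x"
    "(x * b2 - y * b1) / d * a2 + (a1 * y - a2 * x) / d * b2 = y"
    by (simp_all add: divide_simps, simp_all add: d_def algebra_simps)
  then show ?thesis by blast
qed

section \<open>Non-isotropic planes\<close>

text \<open>A point q encodes the affine function (x, y) \<mapsto> q1 x + q2 y + q3, hence the
  non-isotropic plane z = q1 x + q2 y + q3, whose metric dual is (q1, q2, -q3).\<close>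

definition aff_val :: "pt \<Rightarrow> pt \<Rightarrow> real" where
  "aff_val q p = px q * px p + py q * py p + pz q"

definition lin_val :: "pt \<Rightarrow> pt \<Rightarrow> real" where
  "lin_val q v = px q * px v + py q * py v"

definition on_plane :: "pt \<Rightarrow> pt \<Rightarrow> bool" where
  "on_plane r p \<longleftrightarrow> pz p = aff_val r p"

definition top_view :: "pt \<Rightarrow> real \<times> real" where
  "top_view p = (px p, py p)"

definition top_noncollinear :: "pt \<Rightarrow> pt \<Rightarrow> pt \<Rightarrow> bool" where
  "top_noncollinear A B C \<longleftrightarrow> det2 (px B - px A, py B - py A) (px C - px A, py C - py A) \<noteq> 0"

lemma top_view_Pair [simp]: "top_view (a, b, c) = (a, b)"
  by (simp add: top_view_def)

lemma top_view_ops [simp]: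
  "top_view (u + v) = top_view u + top_view v"
  "top_view (u - v) = top_view u - top_view v"
  "top_view (c *\<^sub>R u) = c *\<^sub>R top_view u"
  by (simp_all add: top_view_def)

lemma pt_eq_iff_top_view: "p = q \<longleftrightarrow> top_view p = top_view q \<and> pz p = pz q"
  by (auto simp: pt_eq_iff top_view_def)

lemma aff_val_coeff_ops:
  "aff_val (u + v) p = aff_val u p + aff_val v p"
  "aff_val (u - v) p = aff_val u p - aff_val v p"
  "aff_val (c *\<^sub>R u) p = c * aff_val u p"
  by (simp_all add: aff_val_def algebra_simps)

lemma aff_val_diff: "aff_val q p' - aff_val q p = lin_val q (p' - p)"
  by (simp add: aff_val_def lin_val_def algebra_simps)

lemma lin_val_add: "lin_val q (u + v) = lin_val q u + lin_val q v"
  by (simp add: lin_val_def algebra_simps)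

lemma lin_val_scaleR: "lin_val q (c *\<^sub>R v) = c * lin_val q v"
  by (simp add: lin_val_def algebra_simps)

lemma top_noncollinear_iff_top_view:
  "top_noncollinear A B C \<longleftrightarrow> det2 (top_view B - top_view A) (top_view C - top_view A) \<noteq> 0"
  by (simp add: top_noncollinear_def top_view_def)

lemma top_noncollinear_imp_distinct:
  "top_noncollinear A B C \<Longrightarrow> top_view A \<noteq> top_view B \<and> top_view B \<noteq> top_view C"
  by (auto simp: top_noncollinear_def top_view_def)

lemma aff_val_unique:
  assumes "top_noncollinear A B C"
    and "aff_val q A = aff_val q' A" "aff_val q B = aff_val q' B" "aff_val q C = aff_val q' C"
  shows "q = q'"
proof -
  let ?g1 = "px q - px q'" and ?g2 = "py q - py q'"
  have "?g1 * (px B - px A) + ?g2 * (py B - py A) = 0"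
    "?g1 * (px C - px A) + ?g2 * (py C - py A) = 0"
    using assms(2-4) by (simp_all add: aff_val_def algebra_simps)
  then have "?g1 = 0 \<and> ?g2 = 0"
    using det2_orthogonal_eq_0 assms(1) unfolding top_noncollinear_def by blast
  then show ?thesis using assms(2) by (simp add: pt_eq_iff aff_val_def)
qed

lemma aff_val_same_slope_unique:
  "top_view q = top_view q' \<Longrightarrow> aff_val q p = aff_val q' p \<Longrightarrow> q = q'"
  by (simp add: pt_eq_iff top_view_def aff_val_def)

lemma top_view_eq_if_lin_val_eq:
  assumes "top_noncollinear A B C"
    and "lin_val s (B - A) = lin_val q (B - A)" "lin_val s (C - B) = lin_val q (C - B)"
  shows "top_view s = top_view q"
proof -
  have "det2 (px B - px A, py B - py A) (px C - px B, py C - py B) \<noteq> 0"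
    using assms(1) by (simp add: top_noncollinear_def algebra_simps)
  moreover have "(px s - px q) * (px B - px A) + (py s - py q) * (py B - py A) = 0"
    "(px s - px q) * (px C - px B) + (py s - py q) * (py C - py B) = 0"
    using assms(2,3) by (simp_all add: lin_val_def algebra_simps)
  ultimately have "px s - px q = 0 \<and> py s - py q = 0"
    by (rule det2_orthogonal_eq_0)
  then show ?thesis by (simp add: top_view_def)
qed

lemma affine_plane: "affine {p. on_plane r p}"
  unfolding affine_def on_plane_def aff_val_def
  by (auto simp: algebra_simps) (metis (no_types, lifting) distrib_left mult.commute mult.left_neutral)

lemma affine_hull_eq_plane:
  assumes "on_plane r A" "on_plane r B" "on_plane r C" "on_plane r D" "top_noncollinear A B C"
  shows "affine hull {A, B, C, D} = {p. on_plane r p}"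
proof
  show "affine hull {A, B, C, D} \<subseteq> {p. on_plane r p}"
    using assms by (intro hull_minimal) (auto simp: affine_plane)
  show "{p. on_plane r p} \<subseteq> affine hull {A, B, C, D}"
  proof
    fix p assume "p \<in> {p. on_plane r p}"
    then have p: "on_plane r p" by simp
    obtain s t where st: "s * (px B - px A) + t * (px C - px A) = px p - px A"
      "s * (py B - py A) + t * (py C - py A) = py p - py A"
      using det2_solvable assms(5) unfolding top_noncollinear_def by blast
    have "p = (1 - s - t) *\<^sub>R A + s *\<^sub>R B + t *\<^sub>R C"
      using st assms(1-3) p unfolding pt_eq_iff on_plane_def aff_val_def
      by (simp add: algebra_simps) algebra
    then have "p \<in> affine hull {A, B, C}"
      unfolding affine_hull_3 by force
    then show "p \<in> affine hull {A, B, C, D}"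
      by (meson hull_mono insert_mono subset_insertI subsetD)
  qed
qed

lemma plane_dual_graph: "plane_dual {p. on_plane r p} = (px r, py r, - pz r)"
  unfolding plane_dual_def
proof (rule the_equality)
  fix d assume "{p. on_plane r p} = {x. pz x = px d * px x + py d * py x - pz d}"
  then have "on_plane r p \<longleftrightarrow> pz p = px d * px p + py d * py p - pz d" for p
    by blast
  from this[of "(0, 0, pz r)"] this[of "(1, 0, px r + pz r)"] this[of "(0, 1, py r + pz r)"]
  show "d = (px r, py r, - pz r)"
    by (simp add: on_plane_def aff_val_def pt_eq_iff)
qed (auto simp: on_plane_def aff_val_def)

lemma top_noncollinear_if_not_collinear:
  assumes "on_plane r A" "on_plane r B" "on_plane r C" "\<not> collinear {A, B, C}"
  shows "top_noncollinear A B C"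
proof (rule ccontr)
  define u where "u = B - A"
  define v where "v = C - A"
  have z: "pz u = lin_val r u" "pz v = lin_val r v"
    using assms(1-3) aff_val_diff[of r] unfolding u_def v_def on_plane_def by simp_all
  assume "\<not> top_noncollinear A B C"
  then have det: "px u * py v - py u * px v = 0"
    by (simp add: top_noncollinear_def u_def v_def)
  have eq1: "px u *\<^sub>R v = px v *\<^sub>R u" and eq2: "py u *\<^sub>R v = py v *\<^sub>R u"
    unfolding pt_eq_iff using det by (simp_all add: z lin_val_def algebra_simps)
  have "collinear {0, u, v}"
  proof (cases "px u = 0 \<and> py u = 0")
    case True
    then have "u = 0" using z(1) by (simp add: pt_eq_iff lin_val_def)
    then show ?thesis by (simp add: collinear_lemma)
  next
    case False
    then have "v = (px v / px u) *\<^sub>R u \<or> v = (py v / py u) *\<^sub>R u"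
      using eq1 eq2 by (metis divide_inverse_commute inverse_eq_divide scaleR_scaleR
          vector_fraction_eq_iff)
    then show ?thesis by (auto simp: collinear_lemma)
  qed
  then have "collinear {B, A, C}"
    by (simp add: collinear_3 u_def v_def)
  with assms(4) show False
    by (simp add: insert_commute)
qed

lemma plane_through_directions:
  assumes "det2 (top_view a) (top_view b) \<noteq> 0"
  shows "\<exists>r. \<forall>s t. on_plane r (v0 + s *\<^sub>R a + t *\<^sub>R b)"
proof -
  have "det2 (px a, px b) (py a, py b) \<noteq> 0"
    using assms by (simp add: top_view_def algebra_simps)
  then obtain g1 g2 where g: "g1 * px a + g2 * py a = pz a" "g1 * px b + g2 * py b = pz b"
    using det2_solvable by blast
  have "on_plane (g1, g2, pz v0 - g1 * px v0 - g2 * py v0) (v0 + s *\<^sub>R a + t *\<^sub>R b)" for s t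
    unfolding on_plane_def aff_val_def by (simp add: g[symmetric] algebra_simps)
  then show ?thesis by blast
qed

lemma admissible_faces_top_independent:
  assumes "admissible_4hedral e" "k < 4"
  shows "det2 (top_view (e k)) (top_view (e ((k + 1) mod 4))) \<noteq> 0"
proof -
  obtain s where "in_angle_interior e (0, 0, s)"
    using assms(1) admissible_4hedral_def by blast
  then have "det3 (e k) (e ((k + 1) mod 4)) (0, 0, s) \<noteq> 0"
    using assms(2) unfolding in_angle_interior_def by (metis less_irrefl mult_zero_left)
  then show ?thesis by (simp add: det3_def top_view_def)
qed

section \<open>Faces of nets\<close>

definition heights :: "(nat \<Rightarrow> nat \<Rightarrow> pt) \<Rightarrow> nat \<Rightarrow> nat \<Rightarrow> real" where
  "heights F i j = pz (F i j)"

definition affine_on_face ::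
    "(nat \<Rightarrow> nat \<Rightarrow> pt) \<Rightarrow> (nat \<Rightarrow> nat \<Rightarrow> real) \<Rightarrow> nat \<Rightarrow> nat \<Rightarrow> pt \<Rightarrow> bool" where
  "affine_on_face F h a b q \<longleftrightarrow>
     h a b = aff_val q (F a b) \<and> h (Suc a) b = aff_val q (F (Suc a) b) \<and>
     h (Suc a) (Suc b) = aff_val q (F (Suc a) (Suc b)) \<and> h a (Suc b) = aff_val q (F a (Suc b))"

definition piecewise_affine ::
    "nat \<Rightarrow> nat \<Rightarrow> (nat \<Rightarrow> nat \<Rightarrow> pt) \<Rightarrow> (nat \<Rightarrow> nat \<Rightarrow> real) \<Rightarrow> (nat \<Rightarrow> nat \<Rightarrow> pt) \<Rightarrow> bool"
  where "piecewise_affine m n F h Q \<longleftrightarrow> (\<forall>a<m. \<forall>b<n. affine_on_face F h a b (Q a b))"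

definition face_nondegenerate :: "(nat \<Rightarrow> nat \<Rightarrow> pt) \<Rightarrow> nat \<Rightarrow> nat \<Rightarrow> bool" where
  "face_nondegenerate F a b \<longleftrightarrow> top_noncollinear (F a b) (F (Suc a) b) (F (Suc a) (Suc b))"

definition face_planes :: "nat \<Rightarrow> nat \<Rightarrow> (nat \<Rightarrow> nat \<Rightarrow> pt) \<Rightarrow> (nat \<Rightarrow> nat \<Rightarrow> pt) \<Rightarrow> bool" where
  "face_planes m n F R \<longleftrightarrow>
     piecewise_affine m n F (heights F) R \<and> (\<forall>a<m. \<forall>b<n. face_nondegenerate F a b)"

lemma face_choice:
  assumes "\<forall>a<m. \<forall>b<n. \<exists>x. P a b x"
  obtains X where "\<forall>a<m. \<forall>b<n. P a b (X a b)"
proof -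
  have "P a b (SOME x. P a b x)" if "a < m" "b < n" for a b
    by (rule someI_ex) (use assms that in blast)
  then show thesis by (intro that[of "\<lambda>a b. SOME x. P a b x"]) blast
qed

lemma face_choice4:
  assumes "\<forall>a<m. \<forall>b<n. \<exists>w x y z. P a b w x y z"
  obtains W X Y Z where "\<forall>a<m. \<forall>b<n. P a b (W a b) (X a b) (Y a b) (Z a b)"
proof -
  from assms have "\<forall>a<m. \<forall>b<n. \<exists>v. P a b (fst v) (fst (snd v)) (fst (snd (snd v))) (snd (snd (snd v)))"
    by (metis fst_conv snd_conv)
  then obtain V where "\<forall>a<m. \<forall>b<n.
      P a b (fst (V a b)) (fst (snd (V a b))) (fst (snd (snd (V a b)))) (snd (snd (snd (V a b))))"
    by (rule face_choice)
  then show thesis by (rule that)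
qed

lemma grid_constant:
  fixes K :: "nat \<Rightarrow> nat \<Rightarrow> 'a"
  assumes right: "\<And>a b. Suc a < m \<Longrightarrow> b < n \<Longrightarrow> K a b = K (Suc a) b"
    and up: "\<And>a b. a < m \<Longrightarrow> Suc b < n \<Longrightarrow> K a b = K a (Suc b)"
    and "a < m" "b < n"
  shows "K a b = K 0 0"
proof -
  have row: "K a' 0 = K 0 0" if "a' < m" for a'
    using that
  proof (induction a')
    case (Suc a')
    then show ?case using right[of a' 0] assms(4) by simp
  qed simp
  have column: "K a b' = K a 0" if "b' < n" for b'
    using that
  proof (induction b')
    case (Suc b')
    then show ?case using up[of a b'] assms(3) by simp
  qed simp
  show ?thesis using column[OF assms(4)] row[OF assms(3)] by (rule trans)
qed

lemma index_in_segment: "0 < m \<Longrightarrow> i \<le> m \<Longrightarrow> \<exists>a<m. i = a \<or> i = Suc a"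
  by (metis Suc_pred le_neq_implies_less lessI)

lemma vertex_in_face:
  assumes "0 < m" "0 < n" "i \<le> m" "j \<le> n"
  obtains a b where "a < m" "b < n" "i = a \<or> i = Suc a" "j = b \<or> j = Suc b"
  using index_in_segment[OF assms(1,3)] index_in_segment[OF assms(2,4)] that by blast

lemma affine_on_face_heights:
  "affine_on_face H (heights H) a b r \<longleftrightarrow>
     on_plane r (H a b) \<and> on_plane r (H (Suc a) b) \<and> on_plane r (H (Suc a) (Suc b)) \<and>
     on_plane r (H a (Suc b))"
  by (simp add: affine_on_face_def heights_def on_plane_def)

lemma affine_on_face_unique:
  "face_nondegenerate F a b \<Longrightarrow> affine_on_face F h a b q \<Longrightarrow> affine_on_face F h a b q' \<Longrightarrow> q = q'"
  unfolding face_nondegenerate_def affine_on_face_def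
  by (rule aff_val_unique[of "F a b" "F (Suc a) b" "F (Suc a) (Suc b)"]) simp_all

lemma affine_on_face_at_vertex:
  assumes "interior_vertex m n i j" "piecewise_affine m n F h Q" "a \<in> {i - 1, i}" "b \<in> {j - 1, j}"
  shows "h i j = aff_val (Q a b) (F i j)"
proof -
  obtain i' j' where ij: "i = Suc i'" "j = Suc j'" "Suc i' < m" "Suc j' < n"
    using assms(1) unfolding interior_vertex_def by (metis gr0_implies_Suc)
  then have "affine_on_face F h a b (Q a b)"
    using assms(2-4) by (auto simp: piecewise_affine_def)
  then show ?thesis
    using assms(3,4) ij(1,2) by (auto simp: affine_on_face_def)
qed

lemma piecewise_affine_common_slope:
  assumes "0 < m" "0 < n" "piecewise_affine m n F h Q" "\<forall>a<m. \<forall>b<n. top_view (Q a b) = g"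
  shows "\<exists>\<gamma>. \<forall>i\<le>m. \<forall>j\<le>n. h i j = aff_val \<gamma> (F i j)"
proof -
  have face: "affine_on_face F h a b (Q a b)" if "a < m" "b < n" for a b
    using assms(3) that by (simp add: piecewise_affine_def)
  \<comment> \<open>adjacent faces share a vertex, where their affine functions agree\<close>
  have "Q a b = Q 0 0" if "a < m" "b < n" for a b
  proof (rule grid_constant[OF _ _ that])
    show "Q a b = Q (Suc a) b" if "Suc a < m" "b < n" for a b
      using face[of a b] face[of "Suc a" b] assms(4) that
      by (intro aff_val_same_slope_unique[where p = "F (Suc a) b"]) (simp_all add: affine_on_face_def)
    show "Q a b = Q a (Suc b)" if "a < m" "Suc b < n" for a b
      using face[of a b] face[of a "Suc b"] assms(4) that
      by (intro aff_val_same_slope_unique[where p = "F a (Suc b)"]) (simp_all add: affine_on_face_def)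
  qed
  moreover have "h i j = aff_val (Q a b) (F i j)"
    if "a < m" "b < n" "i = a \<or> i = Suc a" "j = b \<or> j = Suc b" for a b i j
    using face[OF that(1,2)] that(3,4) by (auto simp: affine_on_face_def)
  ultimately have "h i j = aff_val (Q 0 0) (F i j)" if "i \<le> m" "j \<le> n" for i j
    using vertex_in_face[OF assms(1,2) that] by (metis (no_types))
  then show ?thesis by blast
qed

lemma convex_quad_distinct:
  assumes "convex_quad A B C D"
  shows "A \<noteq> B" "B \<noteq> C" "C \<noteq> D" "D \<noteq> A"
proof -
  have nc: "\<not> collinear {A, B, C}" using assms by (simp add: convex_quad_def)
  then show "A \<noteq> B" "B \<noteq> C" by auto
  obtain s t where "t < 1"
    and diagonals: "(1 - s) *\<^sub>R A + s *\<^sub>R C = (1 - t) *\<^sub>R B + t *\<^sub>R D"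
    using assms by (auto simp: convex_quad_def)
  \<comment> \<open>if D were A or C, then B would be an affine combination of A and C\<close>
  have not_combination: False if "(1 - t) *\<^sub>R B = u *\<^sub>R A + v *\<^sub>R C" "u + v = 1 - t" for u v
  proof -
    have "B = (1 / (1 - t)) *\<^sub>R ((1 - t) *\<^sub>R B)"
      using \<open>t < 1\<close> by simp
    also have "\<dots> = (u / (1 - t)) *\<^sub>R A + (v / (1 - t)) *\<^sub>R C"
      unfolding that(1) by (simp add: scaleR_add_right)
    finally have "B = (u / (1 - t)) *\<^sub>R A + (v / (1 - t)) *\<^sub>R C" .
    moreover have "u / (1 - t) + v / (1 - t) = 1"
      using that(2) \<open>t < 1\<close> by (simp add: add_divide_distrib[symmetric])
    ultimately have "B \<in> affine hull {A, C}"
      unfolding affine_hull_2 by blast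
    then have "collinear {A, C, B}"
      by (rule affine_hull_3_imp_collinear)
    with nc show False by (simp add: insert_commute)
  qed
  show "D \<noteq> A"
  proof
    assume "D = A"
    then have "(1 - t) *\<^sub>R B = (1 - s - t) *\<^sub>R A + s *\<^sub>R C"
      using diagonals by (simp add: algebra_simps)
    then show False by (rule not_combination) simp
  qed
  show "C \<noteq> D"
  proof
    assume "C = D"
    then have "(1 - t) *\<^sub>R B = (1 - s) *\<^sub>R A + (s - t) *\<^sub>R C"
      using diagonals by (simp add: algebra_simps)
    then show False by (rule not_combination) simp
  qed
qed

lemma convex_quad_affine_image:
  assumes "linear f" "inj f" "convex_quad A B C D"
  shows "convex_quad (f A + c) (f B + c) (f C + c) (f D + c)"
proof -
  have "{f A + c, f B + c, f C + c} = (+) c ` f ` {A, B, C}"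
    by (auto simp: add.commute)
  then have "aff_dim {f A + c, f B + c, f C + c} = aff_dim {A, B, C}"
    by (simp only: aff_dim_translation_eq aff_dim_injective_linear_image[OF assms(1,2)])
  then have "\<not> collinear {f A + c, f B + c, f C + c}"
    using assms(3) by (simp add: convex_quad_def collinear_aff_dim)
  moreover obtain s t where "0 < s" "s < 1" "0 < t" "t < 1"
    and diagonals: "(1 - s) *\<^sub>R A + s *\<^sub>R C = (1 - t) *\<^sub>R B + t *\<^sub>R D"
    using assms(3) by (auto simp: convex_quad_def)
  moreover have "(1 - u) *\<^sub>R (f X + c) + u *\<^sub>R (f Y + c) = f ((1 - u) *\<^sub>R X + u *\<^sub>R Y) + c"
    for u X Y
    by (simp only: linear_add[OF assms(1)] linear_scale[OF assms(1)]) (simp add: algebra_simps)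
  ultimately show ?thesis
    unfolding convex_quad_def by (metis diagonals)
qed

lemma top_dual_face_plane:
  assumes "affine_on_face H (heights H) a b r" "face_nondegenerate H a b"
  shows "top_dual (face_plane H a b) = top_view r"
proof -
  have "face_plane H a b = {p. on_plane r p}"
    unfolding face_plane_def using assms
    by (intro affine_hull_eq_plane)
       (simp_all add: affine_on_face_def heights_def on_plane_def face_nondegenerate_def)
  then show ?thesis by (simp add: top_dual_def plane_dual_graph top_view_def)
qed

lemma face_at_interior_vertex:
  assumes "2 \<le> m" "2 \<le> n" "a < m" "b < n"
  obtains i j k where "interior_vertex m n i j" "k < 4" "vertex_face H i j k = face_plane H a b"
proof -
  have "interior_vertex m n (max a 1) (max b 1)"
    using assms by (auto simp: interior_vertex_def)
  then show thesis
    by (rule that[of _ _ "if a = 0 then if b = 0 then 0 else 3 else if b = 0 then 1 else 2"])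
       (auto simp: vertex_face_def)
qed

lemma dual_convex_face_plane:
  assumes "dual_convex m n H" "a < m" "b < n"
  shows "\<exists>r. affine_on_face H (heights H) a b r \<and> face_nondegenerate H a b"
proof -
  \<comment> \<open>the face is a flat angle at an interior vertex, spanned by two edges with independent top views\<close>
  have "2 \<le> m" "2 \<le> n" using assms(1) by (auto simp: dual_convex_def)
  then obtain i j k where ijk: "interior_vertex m n i j" "k < 4"
    "vertex_face H i j k = face_plane H a b"
    by (rule face_at_interior_vertex[OF _ _ assms(2,3)])
  then have "dual_convex_at H i j" using assms(1) by (simp add: dual_convex_def)
  then obtain v0 e where adm: "admissible_4hedral e" and
    vf: "\<forall>k<4. vertex_face H i j k = {v0 + s *\<^sub>R e k + t *\<^sub>R e ((k + 1) mod 4) | s t. True}"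
    unfolding dual_convex_at_def by blast
  have plane: "face_plane H a b = {v0 + s *\<^sub>R e k + t *\<^sub>R e ((k + 1) mod 4) | s t. True}"
    using vf ijk(2,3) by simp
  obtain r where "\<forall>s t. on_plane r (v0 + s *\<^sub>R e k + t *\<^sub>R e ((k + 1) mod 4))"
    using plane_through_directions admissible_faces_top_independent[OF adm ijk(2)] by blast
  then have on: "on_plane r p" if "p \<in> face_plane H a b" for p
    using that unfolding plane by blast
  have corners: "H a b \<in> face_plane H a b" "H (Suc a) b \<in> face_plane H a b"
    "H (Suc a) (Suc b) \<in> face_plane H a b" "H a (Suc b) \<in> face_plane H a b"
    by (auto simp: face_plane_def intro: hull_inc)
  have "\<not> collinear {H a b, H (Suc a) b, H (Suc a) (Suc b)}"
    using assms by (simp add: dual_convex_def is_net_def convex_quad_def)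
  then have "face_nondegenerate H a b"
    unfolding face_nondegenerate_def
    by (intro top_noncollinear_if_not_collinear[of r] on corners)
  moreover have "affine_on_face H (heights H) a b r"
    using on corners by (simp add: affine_on_face_def heights_def on_plane_def)
  ultimately show ?thesis by blast
qed

lemma dual_convex_face_planes:
  assumes "dual_convex m n H"
  shows "\<exists>R. face_planes m n H R"
proof -
  have "\<forall>a<m. \<forall>b<n. \<exists>r. affine_on_face H (heights H) a b r \<and> face_nondegenerate H a b"
    using dual_convex_face_plane[OF assms] by blast
  then obtain R where "\<forall>a<m. \<forall>b<n. affine_on_face H (heights H) a b (R a b) \<and> face_nondegenerate H a b"
    by (rule face_choice)
  then show ?thesis
    unfolding face_planes_def piecewise_affine_def by blast
qed

section \<open>Curvature\<close>

definition shoelace :: "real \<times> real \<Rightarrow> real \<times> real \<Rightarrow> real \<times> real \<Rightarrow> real \<times> real \<Rightarrow> real" where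
  "shoelace p0 p1 p2 p3 = det2 p0 p1 + det2 p1 p2 + det2 p2 p3 + det2 p3 p0"

definition vertex_shoelace :: "(nat \<Rightarrow> nat \<Rightarrow> real \<times> real) \<Rightarrow> nat \<Rightarrow> nat \<Rightarrow> real" where
  "vertex_shoelace P i j = shoelace (P (i - 1) (j - 1)) (P i (j - 1)) (P i j) (P (i - 1) j)"

text \<open>The curvature at a vertex is the signed area of the top view of the quadrilateral formed
  by the duals of the four face planes.\<close>

lemma curvature_eq_vertex_shoelace:
  assumes "face_planes m n H R" "interior_vertex m n i j"
  shows "curvature H i j = vertex_shoelace (\<lambda>a b. top_view (R a b)) i j / 2"
proof -
  have "top_dual (face_plane H a b) = top_view (R a b)" if "a < m" "b < n" for a b
    using assms(1) that top_dual_face_plane unfolding face_planes_def piecewise_affine_def by blast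
  moreover have "i - 1 < m" "i < m" "j - 1 < n" "j < n"
    using assms(2) by (auto simp: interior_vertex_def)
  moreover have "(\<Sum>k<4::nat. f k) = f 0 + f 1 + f 2 + f 3" for f :: "nat \<Rightarrow> real"
    by (simp add: eval_nat_numeral)
  ultimately show ?thesis
    by (simp add: curvature_def vertex_face_def vertex_shoelace_def shoelace_def)
qed

lemma vertex_shoelace_cong:
  assumes "interior_vertex m n i j" "\<forall>a<m. \<forall>b<n. P a b = P' a b"
  shows "vertex_shoelace P i j = vertex_shoelace P' i j"
  using assms by (auto simp: vertex_shoelace_def interior_vertex_def)

definition lift :: "(nat \<Rightarrow> nat \<Rightarrow> pt) \<Rightarrow> (nat \<Rightarrow> nat \<Rightarrow> real) \<Rightarrow> nat \<Rightarrow> nat \<Rightarrow> pt" where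
  "lift F h i j = F i j + (0, 0, h i j)"

lemma face_planes_lift:
  assumes "face_planes m n F R" "piecewise_affine m n F h Q"
  shows "face_planes m n (lift F h) (\<lambda>a b. R a b + Q a b)"
  using assms
  by (simp add: face_planes_def piecewise_affine_def affine_on_face_def face_nondegenerate_def
      top_noncollinear_def heights_def lift_def aff_val_def algebra_simps)

lemma curvature_lift_eq_vertex_shoelace:
  assumes "face_planes m n F R" "piecewise_affine m n F h Q" "interior_vertex m n i j"
  shows "curvature (lift F h) i j = vertex_shoelace (\<lambda>a b. top_view (R a b + Q a b)) i j / 2"
  by (rule curvature_eq_vertex_shoelace[OF face_planes_lift[OF assms(1,2)] assms(3)])

section \<open>Isotropic congruences\<close>

definition rot :: "real \<Rightarrow> real \<times> real \<Rightarrow> real \<times> real" where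
  "rot \<phi> v = (cos \<phi> * fst v - sin \<phi> * snd v, sin \<phi> * fst v + cos \<phi> * snd v)"

lemma rot_diff: "rot \<phi> u - rot \<phi> v = rot \<phi> (u - v)"
  by (simp add: rot_def algebra_simps)

lemma rot_inverse: "rot (- \<phi>) (rot \<phi> u) = u"
proof -
  have "x * (cos \<phi> * cos \<phi>) + x * (sin \<phi> * sin \<phi>) = x" for x
    by (metis distrib_left mult_1_right sin_cos_squared_add3)
  then show ?thesis by (cases u) (simp add: rot_def algebra_simps)
qed

lemma det2_rot: "det2 (rot \<phi> u) (rot \<phi> v) = det2 u v"
proof -
  have "det2 (rot \<phi> (a, b)) (rot \<phi> (c, d)) = ((cos \<phi>)\<^sup>2 + (sin \<phi>)\<^sup>2) * det2 (a, b) (c, d)"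
    for a b c d
    unfolding rot_def fst_conv snd_conv det2_Pair by algebra
  then show ?thesis by (cases u, cases v) simp
qed

lemma shoelace_rot: "shoelace (rot \<phi> p0) (rot \<phi> p1) (rot \<phi> p2) (rot \<phi> p3) = shoelace p0 p1 p2 p3"
  by (simp add: shoelace_def det2_rot)

lemma top_view_iso_cong: "top_view (iso_cong \<phi> c1 c2 b p) = rot \<phi> (top_view p) + top_view b"
  by (simp add: iso_cong_def top_view_def rot_def)

lemma pz_iso_cong: "pz (iso_cong \<phi> c1 c2 b p) = pz p + aff_val (c1, c2, pz b) p"
  by (simp add: iso_cong_def aff_val_def algebra_simps)

lemma top_noncollinear_iso_cong:
  "top_noncollinear A B C \<Longrightarrow>
   top_noncollinear (iso_cong \<phi> c1 c2 b A) (iso_cong \<phi> c1 c2 b B) (iso_cong \<phi> c1 c2 b C)"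
  by (simp add: top_noncollinear_iff_top_view top_view_iso_cong rot_diff det2_rot)

lemma convex_quad_iso_cong:
  assumes "convex_quad A B C D"
  shows "convex_quad (iso_cong \<phi> c1 c2 b A) (iso_cong \<phi> c1 c2 b B) (iso_cong \<phi> c1 c2 b C)
           (iso_cong \<phi> c1 c2 b D)"
proof -
  let ?L = "iso_cong \<phi> c1 c2 0"
  have "linear ?L"
    by (rule linearI) (simp_all add: iso_cong_def pt_eq_iff algebra_simps)
  moreover have "inj ?L"
  proof (rule injI)
    fix p q assume eq: "?L p = ?L q"
    have "top_view (?L p) = top_view (?L q)" using eq by simp
    then have "rot \<phi> (top_view p) = rot \<phi> (top_view q)"
      by (simp add: top_view_iso_cong)
    then have "top_view p = top_view q"
      by (metis rot_inverse)
    moreover have "pz p = pz q"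
      using arg_cong[OF eq, of pz] calculation by (simp add: pz_iso_cong aff_val_def top_view_def)
    ultimately show "p = q" by (simp add: pt_eq_iff_top_view)
  qed
  moreover have "iso_cong \<phi> c1 c2 b p = ?L p + b" for p
    by (simp add: iso_cong_def pt_eq_iff)
  ultimately show ?thesis
    using convex_quad_affine_image assms by simp
qed

lemma iso_cong_plane_image:
  "\<exists>r'. top_view r' = rot \<phi> (top_view r + (c1, c2)) \<and>
        (\<forall>p. on_plane r p \<longrightarrow> on_plane r' (iso_cong \<phi> c1 c2 b p))"
proof -
  obtain g1 g2 where g: "rot \<phi> (top_view r + (c1, c2)) = (g1, g2)" by fastforce
  let ?r' = "(g1, g2, pz r + pz b - g1 * px b - g2 * py b)"
  have rot: "g1 = cos \<phi> * (px r + c1) - sin \<phi> * (py r + c2)"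
    "g2 = sin \<phi> * (px r + c1) + cos \<phi> * (py r + c2)"
    using g by (auto simp: rot_def top_view_def)
  have orth: "g1 * (cos \<phi> * x - sin \<phi> * y) + g2 * (sin \<phi> * x + cos \<phi> * y) =
      ((cos \<phi>)\<^sup>2 + (sin \<phi>)\<^sup>2) * ((px r + c1) * x + (py r + c2) * y)" for x y
    unfolding rot by algebra
  have "on_plane ?r' (iso_cong \<phi> c1 c2 b p)" if "on_plane r p" for p
  proof -
    have "aff_val ?r' (iso_cong \<phi> c1 c2 b p) =
        g1 * (cos \<phi> * px p - sin \<phi> * py p) + g2 * (sin \<phi> * px p + cos \<phi> * py p) + pz r + pz b"
      by (simp add: aff_val_def iso_cong_def algebra_simps)
    also have "\<dots> = (px r + c1) * px p + (py r + c2) * py p + pz r + pz b"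
      unfolding orth by simp
    also have "\<dots> = pz (iso_cong \<phi> c1 c2 b p)"
      using that by (simp add: pz_iso_cong on_plane_def aff_val_def algebra_simps)
    finally show ?thesis by (simp add: on_plane_def)
  qed
  moreover have "top_view ?r' = rot \<phi> (top_view r + (c1, c2))"
    using g by (simp add: top_view_def)
  ultimately show ?thesis by blast
qed

lemma iso_cong_horizontal_unique:
  assumes "top_view (iso_cong \<phi> c1 c2 b P) = top_view (iso_cong \<phi>' c1' c2' b' P)"
    and "top_view (iso_cong \<phi> c1 c2 b Q) = top_view (iso_cong \<phi>' c1' c2' b' Q)"
    and "top_view P \<noteq> top_view Q"
  shows "rot \<phi> = rot \<phi>' \<and> top_view b = top_view b'"
proof -
  obtain x y where xy: "top_view P - top_view Q = (x, y)" by fastforce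
  have "rot \<phi> (top_view P) - rot \<phi> (top_view Q) =
      (rot \<phi> (top_view P) + top_view b) - (rot \<phi> (top_view Q) + top_view b)"
    by simp
  also have "\<dots> = (rot \<phi>' (top_view P) + top_view b') - (rot \<phi>' (top_view Q) + top_view b')"
    using assms(1,2) by (simp add: top_view_iso_cong)
  finally have "rot \<phi> (x, y) = rot \<phi>' (x, y)"
    by (simp add: rot_diff xy)
  then have e: "(cos \<phi> - cos \<phi>') * x + (sin \<phi>' - sin \<phi>) * y = 0"
    "(cos \<phi> - cos \<phi>') * y + (sin \<phi>' - sin \<phi>) * - x = 0"
    by (simp_all add: rot_def algebra_simps)
  have "(x, y) \<noteq> 0" using assms(3) xy by (metis right_minus_eq)
  then have "0 < x * x + y * y"
    by (simp add: sum_squares_gt_zero_iff zero_prod_def)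
  then have "det2 (x, y) (y, - x) \<noteq> 0"
    by simp
  from det2_orthogonal_eq_0[OF this e] have "cos \<phi> = cos \<phi>' \<and> sin \<phi> = sin \<phi>'"
    by simp
  then have "rot \<phi> = rot \<phi>'"
    by (simp add: rot_def fun_eq_iff)
  with assms(1) show ?thesis by (simp add: top_view_iso_cong)
qed

context
  fixes m n :: nat and F F' R :: "nat \<Rightarrow> nat \<Rightarrow> pt"
    and \<Phi> C1 C2 :: "nat \<Rightarrow> nat \<Rightarrow> real" and B :: "nat \<Rightarrow> nat \<Rightarrow> pt"
  assumes planes: "face_planes m n F R"
    and congruent: "\<forall>a<m. \<forall>b<n. \<forall>(k, l) \<in> {(a, b), (Suc a, b), (Suc a, Suc b), (a, Suc b)}.
                      F' k l = iso_cong (\<Phi> a b) (C1 a b) (C2 a b) (B a b) (F k l)"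
begin

lemma congruent_corners:
  assumes "a < m" "b < n"
  shows "F' a b = iso_cong (\<Phi> a b) (C1 a b) (C2 a b) (B a b) (F a b)"
    "F' (Suc a) b = iso_cong (\<Phi> a b) (C1 a b) (C2 a b) (B a b) (F (Suc a) b)"
    "F' (Suc a) (Suc b) = iso_cong (\<Phi> a b) (C1 a b) (C2 a b) (B a b) (F (Suc a) (Suc b))"
    "F' a (Suc b) = iso_cong (\<Phi> a b) (C1 a b) (C2 a b) (B a b) (F a (Suc b))"
  using congruent assms by auto

lemma nondegenerate_faces: "a < m \<Longrightarrow> b < n \<Longrightarrow> face_nondegenerate F a b"
  using planes by (simp add: face_planes_def)

text \<open>Adjacent faces share an edge whose end points have distinct top views, so their
  congruences have the same rotation and horizontal translation.\<close>

lemma same_horizontal_motion_right: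
  assumes "Suc a < m" "b < n"
  shows "rot (\<Phi> a b) = rot (\<Phi> (Suc a) b) \<and> top_view (B a b) = top_view (B (Suc a) b)"
proof (rule iso_cong_horizontal_unique)
  show "top_view (F (Suc a) b) \<noteq> top_view (F (Suc a) (Suc b))"
    using nondegenerate_faces[of a b] assms top_noncollinear_imp_distinct
    unfolding face_nondegenerate_def by simp
  show "top_view (iso_cong (\<Phi> a b) (C1 a b) (C2 a b) (B a b) (F (Suc a) b)) =
      top_view (iso_cong (\<Phi> (Suc a) b) (C1 (Suc a) b) (C2 (Suc a) b) (B (Suc a) b) (F (Suc a) b))"
    "top_view (iso_cong (\<Phi> a b) (C1 a b) (C2 a b) (B a b) (F (Suc a) (Suc b))) =
      top_view (iso_cong (\<Phi> (Suc a) b) (C1 (Suc a) b) (C2 (Suc a) b) (B (Suc a) b)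
        (F (Suc a) (Suc b)))"
    using congruent_corners[of a b] congruent_corners[of "Suc a" b] assms by simp_all
qed

lemma same_horizontal_motion_up:
  assumes "a < m" "Suc b < n"
  shows "rot (\<Phi> a b) = rot (\<Phi> a (Suc b)) \<and> top_view (B a b) = top_view (B a (Suc b))"
proof (rule iso_cong_horizontal_unique)
  show "top_view (F a (Suc b)) \<noteq> top_view (F (Suc a) (Suc b))"
    using nondegenerate_faces[of a "Suc b"] assms top_noncollinear_imp_distinct
    unfolding face_nondegenerate_def by simp
  show "top_view (iso_cong (\<Phi> a b) (C1 a b) (C2 a b) (B a b) (F a (Suc b))) =
      top_view (iso_cong (\<Phi> a (Suc b)) (C1 a (Suc b)) (C2 a (Suc b)) (B a (Suc b)) (F a (Suc b)))"
    "top_view (iso_cong (\<Phi> a b) (C1 a b) (C2 a b) (B a b) (F (Suc a) (Suc b))) =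
      top_view (iso_cong (\<Phi> a (Suc b)) (C1 a (Suc b)) (C2 a (Suc b)) (B a (Suc b))
        (F (Suc a) (Suc b)))"
    using congruent_corners[of a b] congruent_corners[of a "Suc b"] assms by simp_all
qed

lemma height_difference_piecewise_affine:
  "piecewise_affine m n F (\<lambda>i j. pz (F' i j) - pz (F i j)) (\<lambda>a b. (C1 a b, C2 a b, pz (B a b)))"
  using congruent_corners by (simp add: piecewise_affine_def affine_on_face_def pz_iso_cong)

lemma facewise_congruent_face_planes:
  obtains R' where "face_planes m n F' R'"
    "\<forall>a<m. \<forall>b<n. top_view (R' a b) = rot (\<Phi> a b) (top_view (R a b) + (C1 a b, C2 a b))"
proof -
  have "\<forall>a<m. \<forall>b<n. \<exists>r'. top_view r' = rot (\<Phi> a b) (top_view (R a b) + (C1 a b, C2 a b)) \<and>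
      (\<forall>p. on_plane (R a b) p \<longrightarrow> on_plane r' (iso_cong (\<Phi> a b) (C1 a b) (C2 a b) (B a b) p))"
    using iso_cong_plane_image by blast
  then obtain R' where R': "\<forall>a<m. \<forall>b<n.
      top_view (R' a b) = rot (\<Phi> a b) (top_view (R a b) + (C1 a b, C2 a b)) \<and>
      (\<forall>p. on_plane (R a b) p \<longrightarrow> on_plane (R' a b) (iso_cong (\<Phi> a b) (C1 a b) (C2 a b) (B a b) p))"
    by (rule face_choice)
  have "face_planes m n F' R'"
    unfolding face_planes_def piecewise_affine_def
  proof (intro conjI allI impI)
    fix a b assume ab: "a < m" "b < n"
    then have "on_plane (R a b) (F a b)" "on_plane (R a b) (F (Suc a) b)"
      "on_plane (R a b) (F (Suc a) (Suc b))" "on_plane (R a b) (F a (Suc b))"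
      using planes by (simp_all add: face_planes_def piecewise_affine_def affine_on_face_heights)
    moreover have "on_plane (R' a b) (iso_cong (\<Phi> a b) (C1 a b) (C2 a b) (B a b) p)"
      if "on_plane (R a b) p" for p
      using R' ab that by blast
    ultimately show "affine_on_face F' (heights F') a b (R' a b)"
      unfolding affine_on_face_heights congruent_corners[OF ab] by blast
    show "face_nondegenerate F' a b"
      using nondegenerate_faces[OF ab]
      by (simp add: face_nondegenerate_def congruent_corners[OF ab] top_noncollinear_iso_cong)
  qed
  with R' show thesis by (intro that) auto
qed

lemma curvature_facewise_congruent:
  assumes "interior_vertex m n i j"
  shows "curvature F' i j = curvature (lift F (\<lambda>i j. pz (F' i j) - pz (F i j))) i j"
proof -
  let ?Q = "\<lambda>a b. (C1 a b, C2 a b, pz (B a b))"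
  obtain i' j' where ij: "i = Suc i'" "j = Suc j'" "Suc i' < m" "Suc j' < n"
    using assms unfolding interior_vertex_def by (metis gr0_implies_Suc)
  have rot: "rot (\<Phi> (Suc i') j') = rot (\<Phi> i' j')" "rot (\<Phi> (Suc i') (Suc j')) = rot (\<Phi> i' j')"
    "rot (\<Phi> i' (Suc j')) = rot (\<Phi> i' j')"
    using same_horizontal_motion_right[of i' j'] same_horizontal_motion_up[of "Suc i'" j']
      same_horizontal_motion_up[of i' j'] ij by simp_all
  obtain R' where R': "face_planes m n F' R'"
    "\<forall>a<m. \<forall>b<n. top_view (R' a b) = rot (\<Phi> a b) (top_view (R a b + ?Q a b))"
    using facewise_congruent_face_planes by auto
  have "curvature F' i j = vertex_shoelace (\<lambda>a b. top_view (R' a b)) i j / 2"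
    by (rule curvature_eq_vertex_shoelace[OF R'(1) assms])
  also have "\<dots> = vertex_shoelace (\<lambda>a b. rot (\<Phi> a b) (top_view (R a b + ?Q a b))) i j / 2"
    using vertex_shoelace_cong[OF assms R'(2)] by simp
  also have "\<dots> = vertex_shoelace (\<lambda>a b. top_view (R a b + ?Q a b)) i j / 2"
    by (simp add: vertex_shoelace_def ij rot shoelace_rot)
  also have "\<dots> = curvature (lift F (\<lambda>i j. pz (F' i j) - pz (F i j))) i j"
    using curvature_lift_eq_vertex_shoelace[OF planes height_difference_piecewise_affine assms]
    by simp
  finally show ?thesis .
qed

lemma congruent_if_height_difference_affine:
  assumes "0 < m" "0 < n" "\<forall>i\<le>m. \<forall>j\<le>n. pz (F' i j) - pz (F i j) = aff_val \<gamma> (F i j)"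
  shows "\<exists>\<phi> c1 c2 b. \<forall>i\<le>m. \<forall>j\<le>n. F' i j = iso_cong \<phi> c1 c2 b (F i j)"
proof -
  let ?K = "\<lambda>a b. (rot (\<Phi> a b), top_view (B a b))"
  have K: "?K a b = ?K 0 0" if "a < m" "b < n" for a b
    by (rule grid_constant[OF _ _ that])
       (simp_all add: same_horizontal_motion_right same_horizontal_motion_up)
  have "F' i j = iso_cong (\<Phi> 0 0) (px \<gamma>) (py \<gamma>) (px (B 0 0), py (B 0 0), pz \<gamma>) (F i j)"
    if ij: "i \<le> m" "j \<le> n" for i j
  proof -
    obtain a b where ab: "a < m" "b < n" "i = a \<or> i = Suc a" "j = b \<or> j = Suc b"
      by (rule vertex_in_face[OF assms(1,2) ij])
    then have "F' i j = iso_cong (\<Phi> a b) (C1 a b) (C2 a b) (B a b) (F i j)"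
      using congruent_corners[OF ab(1,2)] by auto
    then have "top_view (F' i j) = rot (\<Phi> 0 0) (top_view (F i j)) + top_view (B 0 0)"
      using K[OF ab(1,2)] by (simp add: top_view_iso_cong)
    moreover have "pz (F' i j) = pz (F i j) + aff_val \<gamma> (F i j)"
      using assms(3) ij by force
    moreover have "top_view (px (B 0 0), py (B 0 0), pz \<gamma>) = top_view (B 0 0)"
      by (simp add: top_view_def)
    ultimately show ?thesis
      by (simp add: pt_eq_iff_top_view top_view_iso_cong pz_iso_cong)
  qed
  then show ?thesis by blast
qed

end

section \<open>Vertical flexions\<close>

text \<open>The height changes caused by isotropic congruences are exactly the affine functions of the
  top view, so the last clause says that h is not induced by a global congruence.\<close>

definition vertical_flex ::
    "nat \<Rightarrow> nat \<Rightarrow> (nat \<Rightarrow> nat \<Rightarrow> pt) \<Rightarrow> (real \<Rightarrow> nat \<Rightarrow> nat \<Rightarrow> real) \<Rightarrow> bool" where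
  "vertical_flex m n F h \<longleftrightarrow>
     (\<forall>i\<le>m. \<forall>j\<le>n. continuous_on {0..1} (\<lambda>t. h t i j)) \<and>
     (\<forall>i\<le>m. \<forall>j\<le>n. h 0 i j = 0) \<and>
     (\<forall>t\<in>{0..1}. \<exists>Q. piecewise_affine m n F (h t) Q) \<and>
     (\<forall>t\<in>{0..1}. \<forall>i j. interior_vertex m n i j \<longrightarrow> curvature (lift F (h t)) i j = curvature F i j) \<and>
     \<not> (\<forall>t\<in>{0..1}. \<exists>\<gamma>. \<forall>i\<le>m. \<forall>j\<le>n. h t i j = aff_val \<gamma> (F i j))"

lemma vertical_flexI:
  assumes "\<And>i j. i \<le> m \<Longrightarrow> j \<le> n \<Longrightarrow> continuous_on {0..1} (\<lambda>t. h t i j)"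
    and "\<And>i j. i \<le> m \<Longrightarrow> j \<le> n \<Longrightarrow> h 0 i j = 0"
    and "\<And>t. t \<in> {0..1} \<Longrightarrow> \<exists>Q. piecewise_affine m n F (h t) Q"
    and "\<And>t i j. t \<in> {0..1} \<Longrightarrow> interior_vertex m n i j \<Longrightarrow>
           curvature (lift F (h t)) i j = curvature F i j"
    and "\<not> (\<forall>t\<in>{0..1}. \<exists>\<gamma>. \<forall>i\<le>m. \<forall>j\<le>n. h t i j = aff_val \<gamma> (F i j))"
  shows "vertical_flex m n F h"
  using assms unfolding vertical_flex_def by blast

lemma vertical_flexD:
  assumes "vertical_flex m n F h"
  shows "i \<le> m \<Longrightarrow> j \<le> n \<Longrightarrow> continuous_on {0..1} (\<lambda>t. h t i j)"
    and "i \<le> m \<Longrightarrow> j \<le> n \<Longrightarrow> h 0 i j = 0"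
    and "t \<in> {0..1} \<Longrightarrow> \<exists>Q. piecewise_affine m n F (h t) Q"
    and "t \<in> {0..1} \<Longrightarrow> interior_vertex m n i j \<Longrightarrow> curvature (lift F (h t)) i j = curvature F i j"
    and "\<not> (\<forall>t\<in>{0..1}. \<exists>\<gamma>. \<forall>i\<le>m. \<forall>j\<le>n. h t i j = aff_val \<gamma> (F i j))"
  using assms unfolding vertical_flex_def by blast+

definition flexion :: "nat \<Rightarrow> nat \<Rightarrow> (nat \<Rightarrow> nat \<Rightarrow> pt) \<Rightarrow> (real \<Rightarrow> nat \<Rightarrow> nat \<Rightarrow> pt) \<Rightarrow> bool" where
  "flexion m n F Ft \<longleftrightarrow>
     (\<forall>i\<le>m. \<forall>j\<le>n. continuous_on {0..1} (\<lambda>t. Ft t i j)) \<and>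
     (\<forall>i\<le>m. \<forall>j\<le>n. Ft 0 i j = F i j) \<and>
     (\<forall>t\<in>{0..1}. is_net m n (Ft t)) \<and>
     (\<forall>t\<in>{0..1}. \<forall>i<m. \<forall>j<n. \<exists>\<phi> c1 c2 b.
        \<forall>(k, l) \<in> {(i, j), (Suc i, j), (Suc i, Suc j), (i, Suc j)}.
           Ft t k l = iso_cong \<phi> c1 c2 b (F k l)) \<and>
     (\<forall>t\<in>{0..1}. \<forall>i j. interior_vertex m n i j \<longrightarrow> curvature (Ft t) i j = curvature F i j) \<and>
     \<not> (\<forall>t\<in>{0..1}. \<exists>\<phi> c1 c2 b. \<forall>i\<le>m. \<forall>j\<le>n. Ft t i j = iso_cong \<phi> c1 c2 b (F i j))"

lemma flexible_iff_flexion: "flexible m n F \<longleftrightarrow> (\<exists>Ft. flexion m n F Ft)"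
  unfolding flexible_def flexion_def ..

lemma flexionD:
  assumes "flexion m n F Ft"
  shows "i \<le> m \<Longrightarrow> j \<le> n \<Longrightarrow> continuous_on {0..1} (\<lambda>t. Ft t i j)"
    and "i \<le> m \<Longrightarrow> j \<le> n \<Longrightarrow> Ft 0 i j = F i j"
    and "t \<in> {0..1} \<Longrightarrow> \<exists>\<Phi> C1 C2 B. \<forall>a<m. \<forall>b<n.
           \<forall>(k, l) \<in> {(a, b), (Suc a, b), (Suc a, Suc b), (a, Suc b)}.
             Ft t k l = iso_cong (\<Phi> a b) (C1 a b) (C2 a b) (B a b) (F k l)"
    and "t \<in> {0..1} \<Longrightarrow> interior_vertex m n i j \<Longrightarrow> curvature (Ft t) i j = curvature F i j"
    and "\<not> (\<forall>t\<in>{0..1}. \<exists>\<phi> c1 c2 b. \<forall>i\<le>m. \<forall>j\<le>n. Ft t i j = iso_cong \<phi> c1 c2 b (F i j))"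
proof -
  show "t \<in> {0..1} \<Longrightarrow> \<exists>\<Phi> C1 C2 B. \<forall>a<m. \<forall>b<n.
      \<forall>(k, l) \<in> {(a, b), (Suc a, b), (Suc a, Suc b), (a, Suc b)}.
        Ft t k l = iso_cong (\<Phi> a b) (C1 a b) (C2 a b) (B a b) (F k l)"
  proof -
    assume "t \<in> {0..1}"
    with assms have "\<forall>a<m. \<forall>b<n. \<exists>\<phi> c1 c2 b'.
        \<forall>(k, l) \<in> {(a, b), (Suc a, b), (Suc a, Suc b), (a, Suc b)}. Ft t k l = iso_cong \<phi> c1 c2 b' (F k l)"
      unfolding flexion_def by blast
    then obtain \<Phi> C1 C2 B where "\<forall>a<m. \<forall>b<n.
        \<forall>(k, l) \<in> {(a, b), (Suc a, b), (Suc a, Suc b), (a, Suc b)}.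
          Ft t k l = iso_cong (\<Phi> a b) (C1 a b) (C2 a b) (B a b) (F k l)"
      by (rule face_choice4)
    then show ?thesis by blast
  qed
qed (use assms in \<open>auto simp: flexion_def\<close>)

lemma flexion_height_difference:
  assumes "face_planes m n F R" "flexion m n F Ft" "t \<in> {0..1}"
  shows "\<exists>Q. piecewise_affine m n F (\<lambda>i j. pz (Ft t i j) - pz (F i j)) Q"
    and "interior_vertex m n i j \<Longrightarrow>
      curvature (lift F (\<lambda>i j. pz (Ft t i j) - pz (F i j))) i j = curvature F i j"
    and "0 < m \<Longrightarrow> 0 < n \<Longrightarrow> \<forall>i\<le>m. \<forall>j\<le>n. pz (Ft t i j) - pz (F i j) = aff_val \<gamma> (F i j) \<Longrightarrow>
      \<exists>\<phi> c1 c2 b. \<forall>i\<le>m. \<forall>j\<le>n. Ft t i j = iso_cong \<phi> c1 c2 b (F i j)"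
proof -
  obtain \<Phi> C1 C2 B where congruent: "\<forall>a<m. \<forall>b<n.
      \<forall>(k, l) \<in> {(a, b), (Suc a, b), (Suc a, Suc b), (a, Suc b)}.
        Ft t k l = iso_cong (\<Phi> a b) (C1 a b) (C2 a b) (B a b) (F k l)"
    using flexionD(3)[OF assms(2,3)] by blast
  show "\<exists>Q. piecewise_affine m n F (\<lambda>i j. pz (Ft t i j) - pz (F i j)) Q"
    using height_difference_piecewise_affine[OF assms(1) congruent] by blast
  show "curvature (lift F (\<lambda>i j. pz (Ft t i j) - pz (F i j))) i j = curvature F i j"
    if "interior_vertex m n i j"
    using curvature_facewise_congruent[OF assms(1) congruent that] flexionD(4)[OF assms(2,3) that]
    by simp
  show "\<exists>\<phi> c1 c2 b. \<forall>i\<le>m. \<forall>j\<le>n. Ft t i j = iso_cong \<phi> c1 c2 b (F i j)"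
    if "0 < m" "0 < n" "\<forall>i\<le>m. \<forall>j\<le>n. pz (Ft t i j) - pz (F i j) = aff_val \<gamma> (F i j)"
    using congruent_if_height_difference_affine[OF assms(1) congruent that] .
qed

lemma flexion_imp_vertical_flex:
  assumes "dual_convex m n F" "flexion m n F Ft"
  shows "vertical_flex m n F (\<lambda>t i j. pz (Ft t i j) - pz (F i j))"
proof (rule vertical_flexI)
  obtain R where R: "face_planes m n F R"
    using dual_convex_face_planes[OF assms(1)] by blast
  have mn: "0 < m" "0 < n" using assms(1) by (auto simp: dual_convex_def)
  note Ft = flexionD[OF assms(2)] flexion_height_difference[OF R assms(2)]
  show "continuous_on {0..1} (\<lambda>t. pz (Ft t i j) - pz (F i j))" if "i \<le> m" "j \<le> n" for i j
    unfolding pz_def using Ft(1)[OF that] by (intro continuous_intros)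
  show "pz (Ft 0 i j) - pz (F i j) = 0" if "i \<le> m" "j \<le> n" for i j
    using Ft(2)[OF that] by simp
  show "\<exists>Q. piecewise_affine m n F (\<lambda>i j. pz (Ft t i j) - pz (F i j)) Q" if "t \<in> {0..1}" for t
    using Ft(6)[OF that] .
  show "curvature (lift F (\<lambda>i j. pz (Ft t i j) - pz (F i j))) i j = curvature F i j"
    if "t \<in> {0..1}" "interior_vertex m n i j" for t i j
    using Ft(7)[OF that] .
  show "\<not> (\<forall>t\<in>{0..1}. \<exists>\<gamma>. \<forall>i\<le>m. \<forall>j\<le>n. pz (Ft t i j) - pz (F i j) = aff_val \<gamma> (F i j))"
    using Ft(5) Ft(8)[OF _ mn] by blast
qed

lemma lift_face_iso_cong:
  assumes "affine_on_face F h a b q"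
  shows "\<forall>(k, l) \<in> {(a, b), (Suc a, b), (Suc a, Suc b), (a, Suc b)}.
           lift F h k l = iso_cong 0 (px q) (py q) (0, 0, pz q) (F k l)"
proof -
  have "lift F h k l = iso_cong 0 (px q) (py q) (0, 0, pz q) (F k l)"
    if "h k l = aff_val q (F k l)" for k l
    using that by (simp add: lift_def iso_cong_def aff_val_def pt_eq_iff algebra_simps)
  with assms show ?thesis by (simp add: affine_on_face_def)
qed

lemma is_net_lift:
  assumes "is_net m n F" "piecewise_affine m n F h Q"
  shows "is_net m n (lift F h)"
  unfolding is_net_def
proof (intro allI impI)
  fix a b assume "a < m" "b < n"
  then have "convex_quad (F a b) (F (Suc a) b) (F (Suc a) (Suc b)) (F a (Suc b))"
    and "affine_on_face F h a b (Q a b)"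
    using assms by (simp_all add: is_net_def piecewise_affine_def)
  then show "convex_quad (lift F h a b) (lift F h (Suc a) b) (lift F h (Suc a) (Suc b))
      (lift F h a (Suc b))"
    using lift_face_iso_cong by (simp add: convex_quad_iso_cong)
qed

lemma affine_if_lift_congruent:
  assumes "\<forall>i\<le>m. \<forall>j\<le>n. lift F h i j = iso_cong \<phi> c1 c2 b (F i j)"
  shows "\<forall>i\<le>m. \<forall>j\<le>n. h i j = aff_val (c1, c2, pz b) (F i j)"
proof (intro allI impI)
  fix i j assume "i \<le> m" "j \<le> n"
  with assms have "pz (lift F h i j) = pz (iso_cong \<phi> c1 c2 b (F i j))" by simp
  then show "h i j = aff_val (c1, c2, pz b) (F i j)" by (simp add: lift_def pz_iso_cong)
qed

lemma vertical_flex_imp_flexion: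
  assumes "dual_convex m n F" "vertical_flex m n F h"
  shows "flexion m n F (\<lambda>t. lift F (h t))"
  unfolding flexion_def
proof (intro conjI ballI allI impI)
  note h = vertical_flexD[OF assms(2)]
  show "continuous_on {0..1} (\<lambda>t. lift F (h t) i j)" if "i \<le> m" "j \<le> n" for i j
    unfolding lift_def using h(1)[OF that] by (intro continuous_intros)
  show "lift F (h 0) i j = F i j" if "i \<le> m" "j \<le> n" for i j
    using h(2)[OF that] by (simp add: lift_def zero_prod_def)
  show "is_net m n (lift F (h t))" if "t \<in> {0..1}" for t
    using h(3)[OF that] assms(1) is_net_lift by (auto simp: dual_convex_def)
  show "\<exists>\<phi> c1 c2 b'. \<forall>(k, l) \<in> {(a, b), (Suc a, b), (Suc a, Suc b), (a, Suc b)}.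
      lift F (h t) k l = iso_cong \<phi> c1 c2 b' (F k l)"
    if tab: "t \<in> {0..1}" "a < m" "b < n" for t a b
  proof -
    obtain Q where "piecewise_affine m n F (h t) Q" using h(3)[OF tab(1)] by blast
    then have "affine_on_face F (h t) a b (Q a b)" using tab(2,3) by (simp add: piecewise_affine_def)
    from lift_face_iso_cong[OF this] show ?thesis by blast
  qed
  show "curvature (lift F (h t)) i j = curvature F i j"
    if "t \<in> {0..1}" "interior_vertex m n i j" for t i j
    using h(4)[OF that] .
  show "\<not> (\<forall>t\<in>{0..1}. \<exists>\<phi> c1 c2 b. \<forall>i\<le>m. \<forall>j\<le>n. lift F (h t) i j = iso_cong \<phi> c1 c2 b (F i j))"
  proof
    assume congruent:
      "\<forall>t\<in>{0..1}. \<exists>\<phi> c1 c2 b. \<forall>i\<le>m. \<forall>j\<le>n. lift F (h t) i j = iso_cong \<phi> c1 c2 b (F i j)"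
    have "\<exists>\<gamma>. \<forall>i\<le>m. \<forall>j\<le>n. h t i j = aff_val \<gamma> (F i j)" if t: "t \<in> {0..1}" for t
    proof -
      obtain \<phi> c1 c2 b where "\<forall>i\<le>m. \<forall>j\<le>n. lift F (h t) i j = iso_cong \<phi> c1 c2 b (F i j)"
        using congruent t by blast
      from affine_if_lift_congruent[OF this] show ?thesis by blast
    qed
    with h(5) show False by blast
  qed
qed

lemma vertical_flex_transfer:
  assumes "vertical_flex m n F h"
    and "\<And>i j. i \<le> m \<Longrightarrow> j \<le> n \<Longrightarrow> continuous_on {0..1} (\<lambda>t. T (h t) i j)"
    and "\<And>i j. i \<le> m \<Longrightarrow> j \<le> n \<Longrightarrow> T (h 0) i j = 0"
    and "\<And>g Q. piecewise_affine m n F g Q \<Longrightarrow> \<exists>Q'. piecewise_affine m n G (T g) Q'"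
    and "\<And>g Q i j. piecewise_affine m n F g Q \<Longrightarrow> interior_vertex m n i j \<Longrightarrow>
           curvature (lift F g) i j = curvature F i j \<Longrightarrow> curvature (lift G (T g)) i j = curvature G i j"
    and "\<And>g Q \<gamma>. piecewise_affine m n F g Q \<Longrightarrow> \<forall>i\<le>m. \<forall>j\<le>n. T g i j = aff_val \<gamma> (G i j) \<Longrightarrow>
           \<exists>\<gamma>'. \<forall>i\<le>m. \<forall>j\<le>n. g i j = aff_val \<gamma>' (F i j)"
  shows "vertical_flex m n G (\<lambda>t. T (h t))"
proof (rule vertical_flexI)
  note h = vertical_flexD[OF assms(1)]
  show "\<exists>Q. piecewise_affine m n G (T (h t)) Q" if "t \<in> {0..1}" for t
    using h(3)[OF that] assms(4) by blast
  show "curvature (lift G (T (h t))) i j = curvature G i j"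
    if "t \<in> {0..1}" "interior_vertex m n i j" for t i j
    using h(3)[OF that(1)] h(4)[OF that] assms(5) that(2) by blast
  show "\<not> (\<forall>t\<in>{0..1}. \<exists>\<gamma>. \<forall>i\<le>m. \<forall>j\<le>n. T (h t) i j = aff_val \<gamma> (G i j))"
    using h(3,5) assms(6) by metis
qed (use assms(2,3) in auto)

section \<open>Combescure transformations\<close>

definition edge_ratio :: "pt \<Rightarrow> pt \<Rightarrow> real" where
  "edge_ratio u w = inner u w / inner u u"

lemma parallel_vec_edge_ratio:
  assumes "parallel_vec u w" "u \<noteq> 0"
  shows "w = edge_ratio u w *\<^sub>R u"
proof -
  from assms(1) consider c where "w = c *\<^sub>R u" | c where "u = c *\<^sub>R w"
    unfolding parallel_vec_def by blast
  then obtain c where "w = c *\<^sub>R u"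
  proof cases
    case (2 c)
    with assms(2) have "w = (1 / c) *\<^sub>R u" by auto
    then show thesis by (rule that)
  qed
  then show ?thesis
    using assms(2) by (simp add: edge_ratio_def inner_scaleR_right)
qed

text \<open>The heights on G are obtained by integrating the increments of h, scaled by the edge ratios,
  first along the row j = 0 and then along the column of i.\<close>

definition combescure_heights ::
    "(nat \<Rightarrow> nat \<Rightarrow> pt) \<Rightarrow> (nat \<Rightarrow> nat \<Rightarrow> pt) \<Rightarrow> (nat \<Rightarrow> nat \<Rightarrow> real) \<Rightarrow> nat \<Rightarrow> nat \<Rightarrow> real" where
  "combescure_heights F G h i j =
     (\<Sum>k<i. edge_ratio (F (Suc k) 0 - F k 0) (G (Suc k) 0 - G k 0) * (h (Suc k) 0 - h k 0)) +
     (\<Sum>l<j. edge_ratio (F i (Suc l) - F i l) (G i (Suc l) - G i l) * (h i (Suc l) - h i l))"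

lemma combescure_heights_up:
  "combescure_heights F G h i (Suc j) = combescure_heights F G h i j +
     edge_ratio (F i (Suc j) - F i j) (G i (Suc j) - G i j) * (h i (Suc j) - h i j)"
  by (simp add: combescure_heights_def)

lemma increment_lin_val:
  assumes "h' = aff_val q P'" "h = aff_val q P" "Q' - Q = l *\<^sub>R (P' - P)"
  shows "l * (h' - h) = lin_val q (Q' - Q)"
  unfolding assms aff_val_diff lin_val_scaleR ..

lemma continuous_on_combescure_heights:
  assumes "\<And>i j. i \<le> m \<Longrightarrow> j \<le> n \<Longrightarrow> continuous_on S (\<lambda>t. h t i j)" "i \<le> m" "j \<le> n"
  shows "continuous_on S (\<lambda>t. combescure_heights F G (h t) i j)"
  unfolding combescure_heights_def using assms by (intro continuous_intros) auto

lemma combescure_heights_zero: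
  assumes "\<And>i j. i \<le> m \<Longrightarrow> j \<le> n \<Longrightarrow> h i j = 0" "i \<le> m" "j \<le> n"
  shows "combescure_heights F G h i j = 0"
  unfolding combescure_heights_def using assms by (auto intro!: sum.neutral)

context
  fixes m n :: nat and F G :: "nat \<Rightarrow> nat \<Rightarrow> pt"
  assumes F_dual_convex: "dual_convex m n F" and G_dual_convex: "dual_convex m n G"
    and combescure: "combescure m n F G"
begin

lemma F_convex_quad:
  "a < m \<Longrightarrow> b < n \<Longrightarrow> convex_quad (F a b) (F (Suc a) b) (F (Suc a) (Suc b)) (F a (Suc b))"
  using F_dual_convex by (simp add: dual_convex_def is_net_def)

lemma combescure_edge_right:
  assumes "a < m" "b \<le> n"
  shows "G (Suc a) b - G a b =
    edge_ratio (F (Suc a) b - F a b) (G (Suc a) b - G a b) *\<^sub>R (F (Suc a) b - F a b)"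
proof (rule parallel_vec_edge_ratio)
  show "parallel_vec (F (Suc a) b - F a b) (G (Suc a) b - G a b)"
    using combescure assms by (simp add: combescure_def)
  have "0 < n" using F_dual_convex by (simp add: dual_convex_def)
  then consider "b < n" | "b = Suc (n - 1)" using assms(2) by linarith
  then show "F (Suc a) b - F a b \<noteq> 0"
  proof cases
    case 1
    then show ?thesis using convex_quad_distinct(1)[OF F_convex_quad[OF assms(1) 1]] by simp
  next
    case 2
    then show ?thesis
      using convex_quad_distinct(3)[OF F_convex_quad[OF assms(1), of "n - 1"]] \<open>0 < n\<close> by simp
  qed
qed

lemma combescure_edge_up:
  assumes "a \<le> m" "b < n"
  shows "G a (Suc b) - G a b =
    edge_ratio (F a (Suc b) - F a b) (G a (Suc b) - G a b) *\<^sub>R (F a (Suc b) - F a b)"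
proof (rule parallel_vec_edge_ratio)
  show "parallel_vec (F a (Suc b) - F a b) (G a (Suc b) - G a b)"
    using combescure assms by (simp add: combescure_def)
  have "0 < m" using F_dual_convex by (simp add: dual_convex_def)
  then consider "a < m" | "a = Suc (m - 1)" using assms(1) by linarith
  then show "F a (Suc b) - F a b \<noteq> 0"
  proof cases
    case 1
    then show ?thesis using convex_quad_distinct(4)[OF F_convex_quad[OF 1 assms(2)]] by simp
  next
    case 2
    then show ?thesis
      using convex_quad_distinct(2)[OF F_convex_quad[OF _ assms(2), of "m - 1"]] \<open>0 < m\<close> by simp
  qed
qed

lemma combescure_heights_right:
  assumes "piecewise_affine m n F h Q" "a < m" "b \<le> n"
  shows "combescure_heights F G h (Suc a) b = combescure_heights F G h a b +
    edge_ratio (F (Suc a) b - F a b) (G (Suc a) b - G a b) * (h (Suc a) b - h a b)"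
  using assms(3)
proof (induction b)
  case 0
  then show ?case by (simp add: combescure_heights_def)
next
  case (Suc b)
  let ?H = "combescure_heights F G h"
  have face: "affine_on_face F h a b (Q a b)"
    using assms(1,2) Suc.prems by (simp add: piecewise_affine_def)
  \<comment> \<open>the increments of h around a face of F, transported to G, add up to zero\<close>
  have "?H (Suc a) (Suc b) = ?H a b + lin_val (Q a b) (G (Suc a) b - G a b) +
      lin_val (Q a b) (G (Suc a) (Suc b) - G (Suc a) b)"
    using Suc face assms(2) combescure_edge_right[of a b] combescure_edge_up[of "Suc a" b]
    by (simp add: combescure_heights_up affine_on_face_def increment_lin_val)
  also have "\<dots> = ?H a b + lin_val (Q a b) (G a (Suc b) - G a b) +
      lin_val (Q a b) (G (Suc a) (Suc b) - G a (Suc b))"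
    by (simp add: lin_val_add[symmetric])
  also have "\<dots> = ?H a (Suc b) + edge_ratio (F (Suc a) (Suc b) - F a (Suc b))
      (G (Suc a) (Suc b) - G a (Suc b)) * (h (Suc a) (Suc b) - h a (Suc b))"
    using Suc.prems face assms(2) combescure_edge_right[of a "Suc b"] combescure_edge_up[of a b]
    by (simp add: combescure_heights_up affine_on_face_def increment_lin_val)
  finally show ?case .
qed

lemma combescure_heights_affine_on_face:
  assumes "piecewise_affine m n F h Q" "a < m" "b < n"
  shows "affine_on_face G (combescure_heights F G h) a b
           (px (Q a b), py (Q a b), combescure_heights F G h a b - lin_val (Q a b) (G a b))"
proof -
  let ?H = "combescure_heights F G h" and ?q = "Q a b"
  have face: "affine_on_face F h a b ?q"
    using assms by (simp add: piecewise_affine_def)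
  have aff_eq: "aff_val (px ?q, py ?q, ?H a b - lin_val ?q (G a b)) p = ?H a b + lin_val ?q (p - G a b)"
    for p
    by (simp add: aff_val_def lin_val_def algebra_simps)
  have right: "?H (Suc a) b = ?H a b + lin_val ?q (G (Suc a) b - G a b)"
    using combescure_heights_right[OF assms(1,2)] face assms combescure_edge_right[of a b]
    by (simp add: affine_on_face_def increment_lin_val)
  have up: "?H a (Suc b) = ?H a b + lin_val ?q (G a (Suc b) - G a b)"
    using face assms combescure_edge_up[of a b]
    by (simp add: combescure_heights_up affine_on_face_def increment_lin_val)
  have "?H (Suc a) (Suc b) = ?H (Suc a) b + lin_val ?q (G (Suc a) (Suc b) - G (Suc a) b)"
    using face assms combescure_edge_up[of "Suc a" b]
    by (simp add: combescure_heights_up affine_on_face_def increment_lin_val)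
  then have diagonal: "?H (Suc a) (Suc b) = ?H a b + lin_val ?q (G (Suc a) (Suc b) - G a b)"
    unfolding right by (simp add: lin_val_add[symmetric])
  show ?thesis
    unfolding affine_on_face_def aff_eq using right up diagonal by (simp add: lin_val_def)
qed

lemma combescure_same_slopes:
  assumes "a < m" "b < n" "affine_on_face F (heights F) a b r"
    and "affine_on_face G (heights G) a b s" "face_nondegenerate G a b"
  shows "top_view s = top_view r"
proof (rule top_view_eq_if_lin_val_eq)
  show "top_noncollinear (G a b) (G (Suc a) b) (G (Suc a) (Suc b))"
    using assms(5) by (simp add: face_nondegenerate_def)
  have edge: "lin_val s (Q' - Q) = lin_val r (Q' - Q)"
    if "Q' - Q = l *\<^sub>R (P' - P)" "pz P' = aff_val r P'" "pz P = aff_val r P"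
      "pz Q' = aff_val s Q'" "pz Q = aff_val s Q" for P P' Q Q' l
  proof -
    have "lin_val s (Q' - Q) = l * (pz P' - pz P)"
      using arg_cong[OF that(1), of pz] that(4,5) by (simp add: aff_val_diff[symmetric])
    also have "\<dots> = lin_val r (Q' - Q)"
      using that(2,3) by (intro increment_lin_val[OF _ _ that(1)])
    finally show ?thesis .
  qed
  show "lin_val s (G (Suc a) b - G a b) = lin_val r (G (Suc a) b - G a b)"
    using assms(1-4) combescure_edge_right[of a b]
    by (intro edge[where P' = "F (Suc a) b" and P = "F a b"])
       (simp_all add: affine_on_face_def heights_def)
  show "lin_val s (G (Suc a) (Suc b) - G (Suc a) b) = lin_val r (G (Suc a) (Suc b) - G (Suc a) b)"
    using assms(1-4) combescure_edge_up[of "Suc a" b]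
    by (intro edge[where P' = "F (Suc a) (Suc b)" and P = "F (Suc a) b"])
       (simp_all add: affine_on_face_def heights_def)
qed

lemma combescure_heights_piecewise_affine:
  assumes "piecewise_affine m n F h Q"
  shows "\<exists>Q'. piecewise_affine m n G (combescure_heights F G h) Q' \<and>
    (\<forall>a<m. \<forall>b<n. top_view (Q' a b) = top_view (Q a b))"
  using combescure_heights_affine_on_face[OF assms]
  by (intro exI[of _ "\<lambda>a b. (px (Q a b), py (Q a b), combescure_heights F G h a b - lin_val (Q a b) (G a b))"])
     (simp add: piecewise_affine_def top_view_def)

lemma combescure_heights_curvature:
  assumes "piecewise_affine m n F h Q" "interior_vertex m n i j"
    and "curvature (lift F h) i j = curvature F i j"
  shows "curvature (lift G (combescure_heights F G h)) i j = curvature G i j"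
proof -
  obtain R where R: "face_planes m n F R" using dual_convex_face_planes[OF F_dual_convex] by blast
  obtain S where S: "face_planes m n G S" using dual_convex_face_planes[OF G_dual_convex] by blast
  have slopes: "\<forall>a<m. \<forall>b<n. top_view (S a b) = top_view (R a b)"
    using R S combescure_same_slopes by (simp add: face_planes_def piecewise_affine_def)
  obtain Q' where Q': "piecewise_affine m n G (combescure_heights F G h) Q'"
    "\<forall>a<m. \<forall>b<n. top_view (Q' a b) = top_view (Q a b)"
    using combescure_heights_piecewise_affine[OF assms(1)] by blast
  then have "\<forall>a<m. \<forall>b<n. top_view (S a b + Q' a b) = top_view (R a b + Q a b)"
    using slopes by simp
  from vertex_shoelace_cong[OF assms(2) this]
  have "curvature (lift G (combescure_heights F G h)) i j = curvature (lift F h) i j"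
    using curvature_lift_eq_vertex_shoelace[OF S Q'(1) assms(2)]
      curvature_lift_eq_vertex_shoelace[OF R assms(1,2)] by simp
  also have "\<dots> = curvature G i j"
    using assms(3) curvature_eq_vertex_shoelace[OF R assms(2)] curvature_eq_vertex_shoelace[OF S assms(2)]
      vertex_shoelace_cong[OF assms(2) slopes] by simp
  finally show ?thesis .
qed

lemma combescure_heights_affine_imp_affine:
  assumes "piecewise_affine m n F h Q"
    and "\<forall>i\<le>m. \<forall>j\<le>n. combescure_heights F G h i j = aff_val \<gamma> (G i j)"
  shows "\<exists>\<gamma>'. \<forall>i\<le>m. \<forall>j\<le>n. h i j = aff_val \<gamma>' (F i j)"
proof -
  have mn: "0 < m" "0 < n" using F_dual_convex by (auto simp: dual_convex_def)
  obtain Q' where Q': "piecewise_affine m n G (combescure_heights F G h) Q'"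
    "\<forall>a<m. \<forall>b<n. top_view (Q' a b) = top_view (Q a b)"
    using combescure_heights_piecewise_affine[OF assms(1)] by blast
  have "Q' a b = \<gamma>" if "a < m" "b < n" for a b
  proof (rule affine_on_face_unique)
    show "face_nondegenerate G a b"
      using dual_convex_face_plane[OF G_dual_convex that] by blast
    show "affine_on_face G (combescure_heights F G h) a b (Q' a b)"
      using Q'(1) that by (simp add: piecewise_affine_def)
    show "affine_on_face G (combescure_heights F G h) a b \<gamma>"
      using assms(2) that by (simp add: affine_on_face_def)
  qed
  then have "\<forall>a<m. \<forall>b<n. top_view (Q a b) = top_view \<gamma>"
    using Q'(2) by simp
  then show ?thesis by (rule piecewise_affine_common_slope[OF mn assms(1)])
qed

end

lemma combescure_vertical_flex:
  assumes "dual_convex m n F" "dual_convex m n G" "combescure m n F G" "vertical_flex m n F h"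
  shows "vertical_flex m n G (\<lambda>t. combescure_heights F G (h t))"
proof (rule vertical_flex_transfer[where T = "combescure_heights F G", OF assms(4)])
  note h = vertical_flexD[OF assms(4)]
  show "continuous_on {0..1} (\<lambda>t. combescure_heights F G (h t) i j)" if "i \<le> m" "j \<le> n" for i j
    using continuous_on_combescure_heights[OF h(1) that] .
  show "combescure_heights F G (h 0) i j = 0" if "i \<le> m" "j \<le> n" for i j
    using combescure_heights_zero[OF h(2) that] .
  show "\<exists>Q'. piecewise_affine m n G (combescure_heights F G g) Q'"
    if "piecewise_affine m n F g Q" for g Q
    using combescure_heights_piecewise_affine[OF assms(1-3) that] by blast
  show "curvature (lift G (combescure_heights F G g)) i j = curvature G i j"
    if "piecewise_affine m n F g Q" "interior_vertex m n i j"
      "curvature (lift F g) i j = curvature F i j"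
    for g Q i j
    using combescure_heights_curvature[OF assms(1-3) that] .
  show "\<exists>\<gamma>'. \<forall>i\<le>m. \<forall>j\<le>n. g i j = aff_val \<gamma>' (F i j)"
    if "piecewise_affine m n F g Q" "\<forall>i\<le>m. \<forall>j\<le>n. combescure_heights F G g i j = aff_val \<gamma> (G i j)"
    for g Q \<gamma>
    using combescure_heights_affine_imp_affine[OF assms(1-3) that] .
qed

section \<open>Dual-affine transformations\<close>

lemma det3_e3: "det3 a b (0, 0, 1) = det2 (top_view a) (top_view b)"
  by (simp add: det3_def top_view_def)

lemma det3_through_point:
  assumes "aff_val a p = 0" "aff_val b p = 0"
  shows "det3 a b c = aff_val c p * det2 (top_view a) (top_view b)"
proof -
  have a: "pz a = - (px a * px p + py a * py p)" and b: "pz b = - (px b * px p + py b * py p)"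
    using assms by (simp_all add: aff_val_def)
  show ?thesis
    unfolding det3_def aff_val_def top_view_def det2_Pair a b by algebra
qed

lemma shoelace_fan: "shoelace p0 p1 p2 p3 = det2 (p1 - p0) (p2 - p0) + det2 (p2 - p0) (p3 - p0)"
  by (cases p0; cases p1; cases p2; cases p3) (simp add: shoelace_def algebra_simps)

lemma matrix_hom_nth: "(M *v hom p) $ k = M$k$1 * px p + M$k$2 * py p + M$k$3 * pz p + M$k$4"
  by (simp add: matrix_vector_mult_def sum_4 hom_def)

lemma matrix_z_infinity_nth: "(M *v z_infinity) $ k = M$k$3"
  by (simp add: matrix_vector_mult_def sum_4 z_infinity_def)

lemma vector_matrix_nth:
  fixes v :: "real^4" and M :: "real^'n^4"
  shows "(v v* M) $ k = v$1 * M$1$k + v$2 * M$2$k + v$3 * M$3$k + v$4 * M$4$k"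
  by (simp add: vector_matrix_mult_def sum_4 algebra_simps)

locale dual_affine_map =
  fixes M :: "real^4^4"
  assumes dual_affine: "dual_affine M"
begin

text \<open>In homogeneous coordinates the k-th coordinate of the image of p is
  aff_val (row k) p + M$k$3 * pz p, and since M fixes the point at infinity of the z-axis,
  M$k$3 = 0 for k \<noteq> 3.  A plane u of the image pulls back to the plane pullback u, up to the
  weight aff_val (row 4).\<close>

definition row :: "4 \<Rightarrow> pt" where
  "row k = (M$k$1, M$k$2, M$k$4)"

definition pullback :: "pt \<Rightarrow> pt" where
  "pullback u = px u *\<^sub>R row 1 + py u *\<^sub>R row 2 + pz u *\<^sub>R row 4"

lemma z_column: "M$1$3 = 0" "M$2$3 = 0" "M$4$3 = 0"
proof -
  obtain c where c: "M *v z_infinity = c *\<^sub>R z_infinity"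
    using dual_affine by (auto simp: dual_affine_def)
  have "M$k$3 = c * z_infinity $ k" for k
    using arg_cong[OF c, of "\<lambda>v. v $ k"] by (simp add: matrix_z_infinity_nth)
  then show "M$1$3 = 0" "M$2$3 = 0" "M$4$3 = 0"
    by (simp_all add: z_infinity_def)
qed

lemma z_scale_nonzero: "M$3$3 \<noteq> 0"
proof
  assume "M$3$3 = 0"
  then have "M *v z_infinity = 0"
    using z_column by (simp add: vec_eq_iff forall_4 matrix_z_infinity_nth)
  moreover obtain M' where "M' ** M = mat 1"
    using dual_affine by (auto simp: dual_affine_def invertible_def)
  ultimately have "z_infinity = M' *v 0"
    by (metis matrix_vector_mul_assoc matrix_vector_mul_lid)
  then show False by (simp add: z_infinity_def vec_eq_iff forall_4)
qed

lemma hom_coordinate: "(M *v hom p) $ k = aff_val (row k) p + M$k$3 * pz p"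
  by (simp add: matrix_hom_nth row_def aff_val_def algebra_simps)

lemma weight: "(M *v hom p) $ 4 = aff_val (row 4) p"
  by (simp add: hom_coordinate z_column)

lemma image_coordinates:
  assumes "aff_val (row 4) p \<noteq> 0"
  shows "px (dehom (M *v hom p)) * aff_val (row 4) p = aff_val (row 1) p"
    "py (dehom (M *v hom p)) * aff_val (row 4) p = aff_val (row 2) p"
    "pz (dehom (M *v hom p)) * aff_val (row 4) p = aff_val (row 3) p + M$3$3 * pz p"
  using assms by (simp_all add: dehom_def weight hom_coordinate z_column)

lemma aff_val_image:
  assumes "aff_val (row 4) p \<noteq> 0"
  shows "aff_val u (dehom (M *v hom p)) * aff_val (row 4) p = aff_val (pullback u) p"
  using image_coordinates(1,2)[OF assms]
  by (simp add: aff_val_def[of u] pullback_def aff_val_coeff_ops algebra_simps)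

lemma pullback_diff: "pullback (u - v) = pullback u - pullback v"
  by (simp add: pullback_def algebra_simps)

lemma pullback_add: "pullback (u + v) = pullback u + pullback v"
  by (simp add: pullback_def algebra_simps)

lemma pullback_e3: "pullback (0, 0, 1) = row 4"
  by (simp add: pullback_def)

lemma pullback_surj: "\<exists>u. pullback u = r"
proof -
  obtain M' where M': "M' ** M = mat 1"
    using dual_affine by (auto simp: dual_affine_def invertible_def)
  define v :: "real^4"
    where "v = (\<chi> k. if k = 1 then px r else if k = 2 then py r else if k = 3 then 0 else pz r)"
  have "(v v* M') v* M = v"
    by (simp add: vector_matrix_mul_assoc M')
  then have e: "(v v* M')$1 * M$1$k + (v v* M')$2 * M$2$k + (v v* M')$3 * M$3$k +
      (v v* M')$4 * M$4$k = v $ k" for k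
    by (metis vector_matrix_nth)
  have "(v v* M')$3 * M$3$3 = 0"
    using e[of 3] z_column by (simp add: v_def)
  then have "(v v* M')$3 = 0" using z_scale_nonzero by simp
  then have "pullback ((v v* M')$1, (v v* M')$2, (v v* M')$4) = r"
    using e[of 1] e[of 2] e[of 4] by (simp add: pullback_def row_def v_def pt_eq_iff algebra_simps)
  then show ?thesis by blast
qed

lemma det3_pullback:
  "det3 (pullback a) (pullback b) (pullback c) = det3 (row 1) (row 2) (row 4) * det3 a b c"
  unfolding det3_def pullback_def by (simp only: coords_vector_ops) algebra

lemma det3_rows_nonzero: "det3 (row 1) (row 2) (row 4) \<noteq> 0"
proof -
  obtain e1 e2 e3 where "pullback e1 = (1, 0, 0)" "pullback e2 = (0, 1, 0)" "pullback e3 = (0, 0, 1)"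
    using pullback_surj by metis
  then have "det3 (row 1) (row 2) (row 4) * det3 e1 e2 e3 = 1"
    using det3_pullback[of e1 e2 e3] by (simp add: det3_def)
  then show ?thesis by auto
qed

lemma shoelace_pullback:
  assumes "pullback s0 = row 3 + c *\<^sub>R r0" "pullback s1 = row 3 + c *\<^sub>R r1"
    "pullback s2 = row 3 + c *\<^sub>R r2" "pullback s3 = row 3 + c *\<^sub>R r3"
    and "aff_val r0 p = z" "aff_val r1 p = z" "aff_val r2 p = z" "aff_val r3 p = z"
  shows "det3 (row 1) (row 2) (row 4) * shoelace (top_view s0) (top_view s1) (top_view s2) (top_view s3) =
    aff_val (row 4) p * c\<^sup>2 * shoelace (top_view r0) (top_view r1) (top_view r2) (top_view r3)"
proof -
  have sector: "det3 (row 1) (row 2) (row 4) * det2 (top_view (s - s0)) (top_view (s' - s0)) =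
      aff_val (row 4) p * c\<^sup>2 * det2 (top_view (r - r0)) (top_view (r' - r0))"
    if "pullback s = row 3 + c *\<^sub>R r" "pullback s' = row 3 + c *\<^sub>R r'"
      "aff_val r p = z" "aff_val r' p = z" for s s' r r'
  proof -
    have "det3 (row 1) (row 2) (row 4) * det2 (top_view (s - s0)) (top_view (s' - s0)) =
        det3 (pullback (s - s0)) (pullback (s' - s0)) (pullback (0, 0, 1))"
      by (simp add: det3_pullback det3_e3)
    also have "\<dots> = det3 (c *\<^sub>R (r - r0)) (c *\<^sub>R (r' - r0)) (row 4)"
      by (simp add: pullback_diff pullback_e3 that(1,2) assms(1) algebra_simps)
    also have "\<dots> = aff_val (row 4) p * det2 (top_view (c *\<^sub>R (r - r0))) (top_view (c *\<^sub>R (r' - r0)))"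
      using that(3,4) assms(5) by (intro det3_through_point) (simp_all add: aff_val_coeff_ops)
    finally show ?thesis
      by (simp add: det2_scaleR)
  qed
  show ?thesis
    unfolding shoelace_fan top_view_ops(2)[symmetric]
    using sector[OF assms(2,3) assms(6,7)] sector[OF assms(3,4) assms(7,8)]
    by (simp add: algebra_simps)
qed

lemma vertex_shoelace_pullback:
  assumes "interior_vertex m n i j" "\<forall>a<m. \<forall>b<n. pullback (S a b) = row 3 + c *\<^sub>R R a b"
    and "\<forall>a\<in>{i - 1, i}. \<forall>b\<in>{j - 1, j}. aff_val (R a b) p = z"
  shows "det3 (row 1) (row 2) (row 4) * vertex_shoelace (\<lambda>a b. top_view (S a b)) i j =
    aff_val (row 4) p * c\<^sup>2 * vertex_shoelace (\<lambda>a b. top_view (R a b)) i j"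
proof -
  have "i - 1 < m" "i < m" "j - 1 < n" "j < n"
    using assms(1) by (auto simp: interior_vertex_def)
  then show ?thesis
    unfolding vertex_shoelace_def using assms(2,3) by (intro shoelace_pullback) auto
qed

definition image_heights :: "(nat \<Rightarrow> nat \<Rightarrow> pt) \<Rightarrow> (nat \<Rightarrow> nat \<Rightarrow> real) \<Rightarrow> nat \<Rightarrow> nat \<Rightarrow> real" where
  "image_heights F h i j = M$3$3 * h i j / aff_val (row 4) (F i j)"

context
  fixes m n :: nat and F G :: "nat \<Rightarrow> nat \<Rightarrow> pt"
  assumes F_dual_convex: "dual_convex m n F" and G_dual_convex: "dual_convex m n G"
    and image: "\<forall>i\<le>m. \<forall>j\<le>n. (M *v hom (F i j)) $ 4 \<noteq> 0 \<and> G i j = dehom (M *v hom (F i j))"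
begin

lemma weight_nonzero: "i \<le> m \<Longrightarrow> j \<le> n \<Longrightarrow> aff_val (row 4) (F i j) \<noteq> 0"
  using image by (simp add: weight)

lemma aff_val_image_net:
  "i \<le> m \<Longrightarrow> j \<le> n \<Longrightarrow> aff_val u (G i j) * aff_val (row 4) (F i j) = aff_val (pullback u) (F i j)"
  using image weight_nonzero aff_val_image by simp

lemma pullback_face_plane:
  assumes "a < m" "b < n" "face_nondegenerate F a b"
    and "affine_on_face F (heights F) a b \<rho>" "affine_on_face G (heights G) a b \<sigma>"
  shows "pullback \<sigma> = row 3 + M$3$3 *\<^sub>R \<rho>"
proof -
  have "aff_val (pullback \<sigma>) (F i j) = aff_val (row 3 + M$3$3 *\<^sub>R \<rho>) (F i j)"
    if "i \<le> m" "j \<le> n" "pz (F i j) = aff_val \<rho> (F i j)" "pz (G i j) = aff_val \<sigma> (G i j)" for i j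
  proof -
    have "aff_val (pullback \<sigma>) (F i j) = pz (G i j) * aff_val (row 4) (F i j)"
      using aff_val_image_net that by simp
    also have "\<dots> = aff_val (row 3) (F i j) + M$3$3 * pz (F i j)"
      using image_coordinates(3) image weight_nonzero that(1,2) by simp
    also have "\<dots> = aff_val (row 3 + M$3$3 *\<^sub>R \<rho>) (F i j)"
      using that(3) by (simp add: aff_val_coeff_ops)
    finally show ?thesis .
  qed
  then show ?thesis
    using assms unfolding affine_on_face_def heights_def face_nondegenerate_def
    by (intro aff_val_unique[of "F a b" "F (Suc a) b" "F (Suc a) (Suc b)"]) auto
qed

lemma image_heights_affine_on_face:
  assumes "a < m" "b < n" "affine_on_face F h a b q" "pullback \<alpha> = M$3$3 *\<^sub>R q"
  shows "affine_on_face G (image_heights F h) a b \<alpha>"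
proof -
  have "image_heights F h i j = aff_val \<alpha> (G i j)"
    if "i \<le> m" "j \<le> n" "h i j = aff_val q (F i j)" for i j
    using aff_val_image_net[OF that(1,2), of \<alpha>] weight_nonzero[OF that(1,2)] that(3) assms(4)
    by (simp add: image_heights_def aff_val_coeff_ops field_simps)
  then show ?thesis
    using assms(1-3) by (simp add: affine_on_face_def)
qed

lemma image_heights_piecewise_affine:
  assumes "piecewise_affine m n F h Q"
  shows "\<exists>Q'. piecewise_affine m n G (image_heights F h) Q' \<and>
    (\<forall>a<m. \<forall>b<n. pullback (Q' a b) = M$3$3 *\<^sub>R Q a b)"
proof -
  have "\<forall>a<m. \<forall>b<n. \<exists>\<alpha>. pullback \<alpha> = M$3$3 *\<^sub>R Q a b"
    using pullback_surj by blast
  then obtain Q' where "\<forall>a<m. \<forall>b<n. pullback (Q' a b) = M$3$3 *\<^sub>R Q a b"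
    by (rule face_choice)
  with assms show ?thesis
    using image_heights_affine_on_face unfolding piecewise_affine_def by blast
qed

lemma image_heights_curvature:
  assumes "piecewise_affine m n F h Q" "interior_vertex m n i j"
    and "curvature (lift F h) i j = curvature F i j"
  shows "curvature (lift G (image_heights F h)) i j = curvature G i j"
proof -
  let ?D = "det3 (row 1) (row 2) (row 4)" and ?W = "aff_val (row 4) (F i j) * (M$3$3)\<^sup>2"
  obtain R where R: "face_planes m n F R" using dual_convex_face_planes[OF F_dual_convex] by blast
  obtain S where S: "face_planes m n G S" using dual_convex_face_planes[OF G_dual_convex] by blast
  obtain Q' where Q': "piecewise_affine m n G (image_heights F h) Q'"
    "\<forall>a<m. \<forall>b<n. pullback (Q' a b) = M$3$3 *\<^sub>R Q a b"
    using image_heights_piecewise_affine[OF assms(1)] by blast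
  have planes: "\<forall>a<m. \<forall>b<n. pullback (S a b) = row 3 + M$3$3 *\<^sub>R R a b"
    using R S pullback_face_plane by (simp add: face_planes_def piecewise_affine_def)
  have at_vertex: "aff_val (R a b) (F i j) = pz (F i j)" "aff_val (Q a b) (F i j) = h i j"
    if "a \<in> {i - 1, i}" "b \<in> {j - 1, j}" for a b
    using affine_on_face_at_vertex[OF assms(2) _ that, of F "heights F" R] R
      affine_on_face_at_vertex[OF assms(2,1) that] by (simp_all add: face_planes_def heights_def)
  \<comment> \<open>the pullback scales the shoelace sums of G and of the lifted G by the same factor\<close>
  have "?D * vertex_shoelace (\<lambda>a b. top_view (S a b)) i j =
      ?W * vertex_shoelace (\<lambda>a b. top_view (R a b)) i j"
    by (rule vertex_shoelace_pullback[OF assms(2) planes]) (use at_vertex in blast)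
  moreover have "?D * vertex_shoelace (\<lambda>a b. top_view (S a b + Q' a b)) i j =
      ?W * vertex_shoelace (\<lambda>a b. top_view (R a b + Q a b)) i j"
    by (rule vertex_shoelace_pullback[OF assms(2), where z = "pz (F i j) + h i j"])
       (use planes Q'(2) at_vertex in \<open>simp_all add: pullback_add scaleR_add_right aff_val_coeff_ops\<close>)
  moreover have "vertex_shoelace (\<lambda>a b. top_view (R a b + Q a b)) i j =
      vertex_shoelace (\<lambda>a b. top_view (R a b)) i j"
    using curvature_lift_eq_vertex_shoelace[OF R assms(1,2)] curvature_eq_vertex_shoelace[OF R assms(2)]
      assms(3) by simp
  ultimately have "?D * vertex_shoelace (\<lambda>a b. top_view (S a b + Q' a b)) i j =
      ?D * vertex_shoelace (\<lambda>a b. top_view (S a b)) i j"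
    by simp
  then show ?thesis
    using curvature_lift_eq_vertex_shoelace[OF S Q'(1) assms(2)]
      curvature_eq_vertex_shoelace[OF S assms(2)] det3_rows_nonzero by simp
qed

lemma image_heights_affine_imp_affine:
  assumes "\<forall>i\<le>m. \<forall>j\<le>n. image_heights F h i j = aff_val \<gamma> (G i j)"
  shows "\<exists>\<gamma>'. \<forall>i\<le>m. \<forall>j\<le>n. h i j = aff_val \<gamma>' (F i j)"
proof -
  have "h i j = aff_val ((1 / M$3$3) *\<^sub>R pullback \<gamma>) (F i j)" if "i \<le> m" "j \<le> n" for i j
  proof -
    have "image_heights F h i j = aff_val \<gamma> (G i j)"
      using assms that by blast
    then have "M$3$3 * h i j = aff_val \<gamma> (G i j) * aff_val (row 4) (F i j)"
      using weight_nonzero[OF that] by (simp add: image_heights_def field_simps)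
    then show ?thesis
      using aff_val_image_net[OF that] z_scale_nonzero by (simp add: aff_val_coeff_ops field_simps)
  qed
  then show ?thesis by blast
qed

lemma dual_affine_vertical_flex:
  assumes "vertical_flex m n F h"
  shows "vertical_flex m n G (\<lambda>t. image_heights F (h t))"
proof (rule vertical_flex_transfer[where T = "image_heights F", OF assms])
  note h = vertical_flexD[OF assms]
  show "continuous_on {0..1} (\<lambda>t. image_heights F (h t) i j)" if "i \<le> m" "j \<le> n" for i j
    unfolding image_heights_def using h(1)[OF that] weight_nonzero[OF that]
    by (intro continuous_intros) auto
  show "image_heights F (h 0) i j = 0" if "i \<le> m" "j \<le> n" for i j
    using h(2)[OF that] by (simp add: image_heights_def)
  show "\<exists>Q'. piecewise_affine m n G (image_heights F g) Q'"
    if "piecewise_affine m n F g Q" for g Q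
    using image_heights_piecewise_affine[OF that] by blast
  show "curvature (lift G (image_heights F g)) i j = curvature G i j"
    if "piecewise_affine m n F g Q" "interior_vertex m n i j"
      "curvature (lift F g) i j = curvature F i j"
    for g Q i j
    using image_heights_curvature[OF that] .
  show "\<exists>\<gamma>'. \<forall>i\<le>m. \<forall>j\<le>n. g i j = aff_val \<gamma>' (F i j)"
    if "\<forall>i\<le>m. \<forall>j\<le>n. image_heights F g i j = aff_val \<gamma> (G i j)" for g \<gamma>
    using image_heights_affine_imp_affine[OF that] .
qed

end

end

theorem corollary3:
  fixes m n :: nat and F :: "nat \<Rightarrow> nat \<Rightarrow> pt"
  assumes "dual_convex m n F" and "flexible m n F"
  shows "(\<forall>G. dual_convex m n G \<and> combescure m n F G \<longrightarrow> flexible m n G) \<and>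
         (\<forall>G. dual_convex m n G \<and> dual_affine_image m n F G \<longrightarrow> flexible m n G)"
proof -
  obtain Ft where "flexion m n F Ft"
    using assms(2) flexible_iff_flexion by blast
  then have h: "vertical_flex m n F (\<lambda>t i j. pz (Ft t i j) - pz (F i j))"
    by (rule flexion_imp_vertical_flex[OF assms(1)])
  have "flexible m n G" if G: "dual_convex m n G" "combescure m n F G" for G
    using vertical_flex_imp_flexion[OF G(1) combescure_vertical_flex[OF assms(1) G h]]
    by (auto simp: flexible_iff_flexion)
  moreover have "flexible m n G" if G: "dual_convex m n G" "dual_affine_image m n F G" for G
  proof -
    obtain M where "dual_affine_map M"
      and "\<forall>i\<le>m. \<forall>j\<le>n. (M *v hom (F i j)) $ 4 \<noteq> 0 \<and> G i j = dehom (M *v hom (F i j))"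
      using G(2) unfolding dual_affine_image_def dual_affine_map_def by blast
    from dual_affine_map.dual_affine_vertical_flex[OF this(1) assms(1) G(1) this(2) h]
    show ?thesis
      using vertical_flex_imp_flexion[OF G(1)] by (auto simp: flexible_iff_flexion)
  qed
  ultimately show ?thesis by blast
qed

end
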